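(* For any three-user finite-field MWRC with correlated sources (as in the context), the minimum source-channel rate satisfies $\kappa^*\ge \Phi$, where $$\Phi=\max_{\text{distinct } i,j,k\in\{1,2,3\}} \left\{ \frac{H(W_j,W_k\mid W_i)}{\log F - \max \{ H(N_0), H(N_i)\} } \right\}.$$ Equivalently, every achievable source-channel rate $\kappa$ satisfies $H(W_j,W_k\mid W_i)\le \kappa\,[\log F-\max\{H(N_0),H(N_i)\}]$ for all distinct $i,j,k$.
   Context: Model. Nodes $0$ (relay) and $1,2,3$ (users). $\mathcal{F}$ is a finite field with $|\mathcal{F}|=F$ (a prime power), with addition $\oplus$. A discrete memoryless source produces i.i.d. triplets $(W_1[u],W_2[u],W_3[u])$, $u=1,\dots,m$, according to a fixed joint pmf $p(w_1,w_2,w_3)$ on finite alphabets; user $i$'s message is $\mathbf{W}_i=(W_i[1],\dots,W_i[m])$; the relay has no message. The channel is used $n$ times: uplink $Y_0=X_1\oplus X_2\oplus X_3\oplus N_0$, downlink $Y_i=X_0\oplus N_i$ for $i=1,2,3$, with all $X_d,Y_d,N_d\in\mathcal{F}$; the noises $N_d$ are independent across nodes and channel uses, each $N_d$ has a fixed distribution over uses, independent of the sources, and $H(N_d)<\log F$. All logarithms/entropies are in bits. A block code of source-channel rate $\kappa=n/m$ consists of encoding functions $X_d[t]=f_{d,t}(\mathbf{W}_d,Y_d[1],\dots,Y_d[t-1])$ for $d\in\{0,1,2,3\}$, $t=1,\dots,n$ (with $\mathbf{W}_0$ empty; feedback allowed), and decoders $(\widehat{\mathbf{W}}_j,\widehat{\mathbf{W}}_k)=h_i(\mathbf{Y}_i,\mathbf{W}_i)$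 at each user $i$, $\{i,j,k\}=\{1,2,3\}$. $P_e$ is the probability that at least one user decodes incorrectly. A rate $\kappa$ is achievable if for every $\zeta>0$ there is a block code of source-channel rate $\kappa$ with $P_e<\zeta$. $\kappa^*$ denotes the infimum of achievable source-channel rates. *)

theory Defs
  imports "HOL-Probability.Probability"
begin

definition entropy :: "'x::finite pmf \<Rightarrow> real" where
  "entropy P = - (\<Sum>x\<in>UNIV. if pmf P x = 0 then 0 else pmf P x * log 2 (pmf P x))"

definition cond_entropy :: "'o pmf \<Rightarrow> ('o \<Rightarrow> 'y::finite) \<Rightarrow> ('o \<Rightarrow> 'x::finite) \<Rightarrow> real" where
  "cond_entropy P Y X =
     - (\<Sum>(x, y)\<in>UNIV.
          let pxy = pmf (map_pmf (\<lambda>\<omega>. (X \<omega>, Y \<omega>)) P) (x, y);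
              px  = pmf (map_pmf X P) x
          in if pxy = 0 then 0 else pxy * log 2 (pxy / px))"

text \<open>Time indices are 0-based: at time t (t = 0..n-1) node d sends
  X_d[t] = enc_d t W_d (Y_d[0..t-1]); the relay has no message.
  User i decodes (W_j, W_k) from (Y_i, W_i).\<close>
record ('f, 'a, 'b, 'c) mwrc_code =
  enc0 :: "nat \<Rightarrow> 'f list \<Rightarrow> 'f"
  enc1 :: "nat \<Rightarrow> 'a list \<Rightarrow> 'f list \<Rightarrow> 'f"
  enc2 :: "nat \<Rightarrow> 'b list \<Rightarrow> 'f list \<Rightarrow> 'f"
  enc3 :: "nat \<Rightarrow> 'c list \<Rightarrow> 'f list \<Rightarrow> 'f"
  dec1 :: "'f list \<Rightarrow> 'a list \<Rightarrow> 'b list \<times> 'c list"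
  dec2 :: "'f list \<Rightarrow> 'b list \<Rightarrow> 'a list \<times> 'c list"
  dec3 :: "'f list \<Rightarrow> 'c list \<Rightarrow> 'a list \<times> 'b list"

text \<open>Received sequences (Y_0, Y_1, Y_2, Y_3) after t channel uses, given messages and
  noise realisation z (z (d, t) = N_d at time t).
  Uplink: Y_0 = X_1 + X_2 + X_3 + N_0;  downlink: Y_i = X_0 + N_i.\<close>
fun mwrc_run ::
  "('f::field, 'a, 'b, 'c, 'z) mwrc_code_scheme \<Rightarrow> 'a list \<Rightarrow> 'b list \<Rightarrow> 'c list \<Rightarrow>
   (nat \<times> nat \<Rightarrow> 'f) \<Rightarrow> nat \<Rightarrow> 'f list \<times> 'f list \<times> 'f list \<times> 'f list" where
  "mwrc_run C w1 w2 w3 z 0 = ([], [], [], [])"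
| "mwrc_run C w1 w2 w3 z (Suc t) =
     (case mwrc_run C w1 w2 w3 z t of (y0, y1, y2, y3) \<Rightarrow>
        let x0 = enc0 C t y0; x1 = enc1 C t w1 y1; x2 = enc2 C t w2 y2; x3 = enc3 C t w3 y3
        in (y0 @ [x1 + x2 + x3 + z (0, t)], y1 @ [x0 + z (1, t)],
            y2 @ [x0 + z (2, t)], y3 @ [x0 + z (3, t)]))"

definition source_block :: "('a \<times> 'b \<times> 'c) pmf \<Rightarrow> nat \<Rightarrow> (nat \<Rightarrow> 'a \<times> 'b \<times> 'c) pmf" where
  "source_block p m = Pi_pmf {..<m} undefined (\<lambda>_. p)"

definition noise_block :: "(nat \<Rightarrow> 'f pmf) \<Rightarrow> nat \<Rightarrow> (nat \<times> nat \<Rightarrow> 'f) pmf" where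
  "noise_block q n = Pi_pmf ({..<4} \<times> {..<n}) undefined (\<lambda>(d, t). q d)"

definition err_prob ::
  "('a \<times> 'b \<times> 'c) pmf \<Rightarrow> (nat \<Rightarrow> 'f::field pmf) \<Rightarrow> ('f, 'a, 'b, 'c) mwrc_code \<Rightarrow> nat \<Rightarrow> nat \<Rightarrow> real" where
  "err_prob p q C m n =
     measure_pmf.prob (pair_pmf (source_block p m) (noise_block q n))
       {(s, z). let w1 = map (\<lambda>u. fst (s u)) [0..<m];
                    w2 = map (\<lambda>u. fst (snd (s u))) [0..<m];
                    w3 = map (\<lambda>u. snd (snd (s u))) [0..<m]
                in case mwrc_run C w1 w2 w3 z n of (y0, y1, y2, y3) \<Rightarrow>
                     dec1 C y1 w1 \<noteq> (w2, w3) \<or> dec2 C y2 w2 \<noteq> (w1, w3) \<or> dec3 C y3 w3 \<noteq> (w1, w2)}"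

definition achievable :: "('a \<times> 'b \<times> 'c) pmf \<Rightarrow> (nat \<Rightarrow> 'f::field pmf) \<Rightarrow> real \<Rightarrow> bool" where
  "achievable p q \<kappa> \<longleftrightarrow>
     (\<forall>\<zeta>>0. \<exists>m n (C :: ('f, 'a, 'b, 'c) mwrc_code).
        m > 0 \<and> real n / real m = \<kappa> \<and> err_prob p q C m n < \<zeta>)"

text \<open>kappa* = infimum of achievable rates (in the extended reals, so Inf {} = \<infinity>).\<close>
definition kappa_star :: "('a \<times> 'b \<times> 'c) pmf \<Rightarrow> (nat \<Rightarrow> 'f::field pmf) \<Rightarrow> ereal" where
  "kappa_star p q = Inf (ereal ` {\<kappa>. achievable p q \<kappa>})"

end

theory Submission
  imports Defs
begin

(* Fix a user i and a cut node d, either the relay (d = 0, whose input Y_0 carries all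
   information reaching the users) or user i itself (d = i).  For a code with m source
   symbols and n channel uses, with T the messages of the other two users and W user i's
   own message list:
   - Fano's inequality bounds H(T | W, Y_i) by h(e) + e m log |W_j W_k|, e the error
     probability;
   - the cut-set inequality gives H(T | W) - H(T | W, Y_i) \<le> n (log F - H(N_d)): the
     output Y_d carries at most n log F bits, and given all messages and all noise off row d
     it determines the noise row N_d^n, whose n H(N_d) bits are independent of everything
     else and hence useless for decoding;
   - H(T | W) = m H(W_j, W_k | W_i) because the source is i.i.d.
   Dividing by m and letting e \<rightarrow> 0 along codes of rate \<kappa> gives
   H(W_j, W_k | W_i) \<le> \<kappa> (log F - H(N_d)) for d = 0 and d = i, hence the bound for each
   user, and the theorem follows by taking the maximum over users and the infimum over \<kappa>. *)

section \<open>Entropy of random variables on finitely supported pmfs\<close>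

definition H_pmf :: "'x pmf \<Rightarrow> real" where
  "H_pmf D = - (\<Sum>x\<in>set_pmf D. pmf D x * log 2 (pmf D x))"

definition H_rv :: "'o pmf \<Rightarrow> ('o \<Rightarrow> 'x) \<Rightarrow> real" where
  "H_rv P X = H_pmf (map_pmf X P)"

lemma pmf_map_sum:
  assumes "finite (set_pmf P)"
  shows "pmf (map_pmf X P) x = (\<Sum>\<omega>\<in>{\<omega>\<in>set_pmf P. X \<omega> = x}. pmf P \<omega>)"
proof -
  have "pmf (map_pmf X P) x = measure P (X -` {x} \<inter> set_pmf P)"
    by (simp add: pmf_map measure_Int_set_pmf)
  also have "X -` {x} \<inter> set_pmf P = {\<omega>\<in>set_pmf P. X \<omega> = x}" by auto
  also have "measure P \<dots> = (\<Sum>\<omega>\<in>{\<omega>\<in>set_pmf P. X \<omega> = x}. pmf P \<omega>)"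
    using assms by (intro measure_measure_pmf_finite) auto
  finally show ?thesis .
qed

lemma expect_map:
  assumes "finite (set_pmf P)" "finite A" "X ` set_pmf P \<subseteq> A"
  shows "(\<Sum>x\<in>A. pmf (map_pmf X P) x * h x) = (\<Sum>\<omega>\<in>set_pmf P. pmf P \<omega> * h (X \<omega>))"
proof -
  have "(\<Sum>x\<in>A. pmf (map_pmf X P) x * h x)
      = (\<Sum>x\<in>A. \<Sum>\<omega>\<in>{\<omega>\<in>set_pmf P. X \<omega> = x}. pmf P \<omega> * h (X \<omega>))"
    by (intro sum.cong refl) (simp add: pmf_map_sum[OF assms(1)] sum_distrib_right)
  also have "\<dots> = (\<Sum>\<omega>\<in>set_pmf P. pmf P \<omega> * h (X \<omega>))"
    by (rule sum.group[OF assms(1,2,3)])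
  finally show ?thesis .
qed

lemma pmf_map_pos: "\<omega> \<in> set_pmf P \<Longrightarrow> pmf (map_pmf X P) (X \<omega>) > 0"
  by (intro pmf_positive) auto

lemma sum_pmf_set: "finite (set_pmf P) \<Longrightarrow> (\<Sum>\<omega>\<in>set_pmf P. pmf P \<omega>) = 1"
  by (rule sum_pmf_eq_1) auto

lemma H_rv_exp:
  assumes "finite (set_pmf P)"
  shows "H_rv P X = - (\<Sum>\<omega>\<in>set_pmf P. pmf P \<omega> * log 2 (pmf (map_pmf X P) (X \<omega>)))"
  unfolding H_rv_def H_pmf_def
  by (subst expect_map[OF assms]) (auto intro: finite_imageI assms)

lemma H_rv_mono:
  assumes "finite (set_pmf P)"
    and "\<And>\<omega> \<omega>'. \<omega> \<in> set_pmf P \<Longrightarrow> \<omega>' \<in> set_pmf P \<Longrightarrow> X \<omega> = X \<omega>' \<Longrightarrow> Y \<omega> = Y \<omega>'"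
  shows "H_rv P Y \<le> H_rv P X"
proof -
  have "pmf P \<omega> * log 2 (pmf (map_pmf X P) (X \<omega>)) \<le> pmf P \<omega> * log 2 (pmf (map_pmf Y P) (Y \<omega>))"
    if w: "\<omega> \<in> set_pmf P" for \<omega>
  proof -
    have "pmf (map_pmf X P) (X \<omega>) \<le> pmf (map_pmf Y P) (Y \<omega>)"
      unfolding pmf_map_sum[OF assms(1)] using assms(2)[OF _ w] assms(1)
      by (intro sum_mono2) auto
    then show ?thesis using pmf_map_pos[OF w, of X] pmf_nonneg[of P \<omega>]
      by (intro mult_left_mono) auto
  qed
  then show ?thesis unfolding H_rv_exp[OF assms(1)] by (simp add: sum_mono)
qed

lemma H_rv_cong:
  assumes "finite (set_pmf P)"
    and "\<And>\<omega> \<omega>'. \<omega> \<in> set_pmf P \<Longrightarrow> \<omega>' \<in> set_pmf P \<Longrightarrow> X \<omega> = X \<omega>' \<longleftrightarrow> Y \<omega> = Y \<omega>'"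
  shows "H_rv P Y = H_rv P X"
  using H_rv_mono[OF assms(1), of X Y] H_rv_mono[OF assms(1), of Y X] assms(2) by fastforce

lemma log2_le_minus_one:
  fixes x :: real
  assumes "x > 0"
  shows "log 2 x \<le> (x - 1) / ln 2"
  unfolding log_def using assms by (intro divide_right_mono ln_le_minus_one) auto

text \<open>Gibbs-type bound: a weighted sum of logarithms is controlled by the weighted sum of
  the arguments.  All entropy inequalities below are instances of it.\<close>
lemma sum_log2_le:
  fixes w r :: "'o \<Rightarrow> real"
  assumes "finite S" "\<And>\<omega>. \<omega> \<in> S \<Longrightarrow> w \<omega> \<ge> 0" "\<And>\<omega>. \<omega> \<in> S \<Longrightarrow> r \<omega> > 0"
  shows "(\<Sum>\<omega>\<in>S. w \<omega> * log 2 (r \<omega>)) \<le> ((\<Sum>\<omega>\<in>S. w \<omega> * r \<omega>) - (\<Sum>\<omega>\<in>S. w \<omega>)) / ln 2"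
proof -
  have "(\<Sum>\<omega>\<in>S. w \<omega> * log 2 (r \<omega>)) \<le> (\<Sum>\<omega>\<in>S. w \<omega> * ((r \<omega> - 1) / ln 2))"
    using assms by (intro sum_mono mult_left_mono log2_le_minus_one) auto
  also have "\<dots> = ((\<Sum>\<omega>\<in>S. w \<omega> * r \<omega>) - (\<Sum>\<omega>\<in>S. w \<omega>)) / ln 2"
    by (simp add: sum_divide_distrib[symmetric] sum_subtractf right_diff_distrib)
  finally show ?thesis .
qed

lemma marginal_sum:
  assumes "finite (set_pmf P)"
  shows "(\<Sum>z\<in>Z ` set_pmf P. pmf (map_pmf (\<lambda>\<omega>. (Y \<omega>, Z \<omega>)) P) (y, z)) = pmf (map_pmf Y P) y"
proof -
  have "\<And>z. {\<omega>\<in>set_pmf P. (Y \<omega>, Z \<omega>) = (y, z)} = {\<omega>\<in>{\<omega>\<in>set_pmf P. Y \<omega> = y}. Z \<omega> = z}"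
    by auto
  then have "(\<Sum>z\<in>Z ` set_pmf P. pmf (map_pmf (\<lambda>\<omega>. (Y \<omega>, Z \<omega>)) P) (y, z))
      = (\<Sum>z\<in>Z ` set_pmf P. \<Sum>\<omega>\<in>{\<omega>\<in>{\<omega>\<in>set_pmf P. Y \<omega> = y}. Z \<omega> = z}. pmf P \<omega>)"
    unfolding pmf_map_sum[OF assms] by simp
  also have "\<dots> = (\<Sum>\<omega>\<in>{\<omega>\<in>set_pmf P. Y \<omega> = y}. pmf P \<omega>)"
    using assms by (intro sum.group) auto
  finally show ?thesis unfolding pmf_map_sum[OF assms] .
qed

text \<open>The key estimate for submodularity: p(x,y) p(y,z) / p(y) is a sub-probability
  on the triples, so its likelihood ratio against p(x,y,z) has expectation at most 1.\<close>
lemma submod_ratio_sum: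
  fixes P :: "'o pmf" and X :: "'o \<Rightarrow> 'x" and Y :: "'o \<Rightarrow> 'y" and Z :: "'o \<Rightarrow> 'z"
  defines "pxyz \<equiv> pmf (map_pmf (\<lambda>\<omega>. ((X \<omega>, Y \<omega>), Z \<omega>)) P)"
    and "pxy \<equiv> pmf (map_pmf (\<lambda>\<omega>. (X \<omega>, Y \<omega>)) P)"
    and "pyz \<equiv> pmf (map_pmf (\<lambda>\<omega>. (Y \<omega>, Z \<omega>)) P)"
    and "py \<equiv> pmf (map_pmf Y P)"
  assumes fin: "finite (set_pmf P)"
  shows "(\<Sum>\<omega>\<in>set_pmf P. pmf P \<omega> * (pxy (X \<omega>, Y \<omega>) * pyz (Y \<omega>, Z \<omega>)
            / (pxyz ((X \<omega>, Y \<omega>), Z \<omega>) * py (Y \<omega>)))) \<le> 1"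
proof -
  define S where "S = set_pmf P"
  define g where "g = (\<lambda>((x, y), z). pxy (x, y) * pyz (y, z) / py y)"
  define T where "T = (\<lambda>\<omega>. ((X \<omega>, Y \<omega>), Z \<omega>)) ` S"
  define XY where "XY = (\<lambda>\<omega>. (X \<omega>, Y \<omega>)) ` S"
  define ZZ where "ZZ = Z ` S"
  have finS: "finite S" using fin S_def by simp
  have "(\<Sum>\<omega>\<in>S. pmf P \<omega> * (pxy (X \<omega>, Y \<omega>) * pyz (Y \<omega>, Z \<omega>) / (pxyz ((X \<omega>, Y \<omega>), Z \<omega>) * py (Y \<omega>))))
      = (\<Sum>t\<in>T. pxyz t * (g t / pxyz t))"
    unfolding pxyz_def T_def S_def
    by (subst expect_map[OF fin]) (auto simp: fin g_def ac_simps)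
  also have "\<dots> = (\<Sum>t\<in>T. g t)"
  proof (intro sum.cong refl)
    fix t assume "t \<in> T"
    then obtain \<omega> where "\<omega> \<in> S" "t = ((X \<omega>, Y \<omega>), Z \<omega>)" by (auto simp: T_def)
    then show "pxyz t * (g t / pxyz t) = g t"
      using pmf_map_pos[of \<omega> P "\<lambda>\<omega>. ((X \<omega>, Y \<omega>), Z \<omega>)"] unfolding pxyz_def S_def by simp
  qed
  also have "\<dots> \<le> (\<Sum>t\<in>XY \<times> ZZ. g t)"
    using finS by (intro sum_mono2) (auto simp: T_def XY_def ZZ_def g_def pxy_def pyz_def py_def)
  also have "\<dots> = (\<Sum>xy\<in>XY. \<Sum>z\<in>ZZ. g (xy, z))"
    by (simp add: sum.cartesian_product case_prod_unfold)
  also have "\<dots> = (\<Sum>(x, y)\<in>XY. pxy (x, y) / py y * (\<Sum>z\<in>ZZ. pyz (y, z)))"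
    by (simp add: g_def sum_distrib_left case_prod_unfold)
  also have "\<dots> = (\<Sum>(x, y)\<in>XY. pxy (x, y))"
  proof (intro sum.cong refl)
    fix xy assume "xy \<in> XY"
    then obtain \<omega> where w: "\<omega> \<in> S" "xy = (X \<omega>, Y \<omega>)" by (auto simp: XY_def)
    have "(\<Sum>z\<in>ZZ. pyz (Y \<omega>, z)) = py (Y \<omega>)"
      unfolding ZZ_def pyz_def py_def S_def by (rule marginal_sum[OF fin])
    then show "(case xy of (x, y) \<Rightarrow> pxy (x, y) / py y * (\<Sum>z\<in>ZZ. pyz (y, z)))
             = (case xy of (x, y) \<Rightarrow> pxy (x, y))"
      using w pmf_map_pos[of \<omega> P Y] by (simp add: py_def S_def)
  qed
  also have "\<dots> = 1"
    unfolding pxy_def XY_def S_def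
    by (simp add: case_prod_unfold, rule sum_pmf_eq_1) (auto simp: fin)
  finally show ?thesis unfolding S_def .
qed

lemma H_rv_submod:
  assumes fin: "finite (set_pmf P)"
  shows "H_rv P (\<lambda>\<omega>. ((X \<omega>, Y \<omega>), Z \<omega>)) + H_rv P Y
         \<le> H_rv P (\<lambda>\<omega>. (X \<omega>, Y \<omega>)) + H_rv P (\<lambda>\<omega>. (Y \<omega>, Z \<omega>))"
proof -
  define pxyz where "pxyz = pmf (map_pmf (\<lambda>\<omega>. ((X \<omega>, Y \<omega>), Z \<omega>)) P)"
  define pxy where "pxy = pmf (map_pmf (\<lambda>\<omega>. (X \<omega>, Y \<omega>)) P)"
  define pyz where "pyz = pmf (map_pmf (\<lambda>\<omega>. (Y \<omega>, Z \<omega>)) P)"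
  define py where "py = pmf (map_pmf Y P)"
  define r where "r = (\<lambda>\<omega>. pxy (X \<omega>, Y \<omega>) * pyz (Y \<omega>, Z \<omega>) / (pxyz ((X \<omega>, Y \<omega>), Z \<omega>) * py (Y \<omega>)))"
  have pos: "pxyz ((X \<omega>, Y \<omega>), Z \<omega>) > 0" "pxy (X \<omega>, Y \<omega>) > 0" "pyz (Y \<omega>, Z \<omega>) > 0" "py (Y \<omega>) > 0"
    if "\<omega> \<in> set_pmf P" for \<omega>
    using that unfolding pxyz_def pxy_def pyz_def py_def by (auto intro: pmf_map_pos)
  have log_r: "log 2 (r \<omega>) = log 2 (pxy (X \<omega>, Y \<omega>)) + log 2 (pyz (Y \<omega>, Z \<omega>))
                 - log 2 (pxyz ((X \<omega>, Y \<omega>), Z \<omega>)) - log 2 (py (Y \<omega>))"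
    if "\<omega> \<in> set_pmf P" for \<omega>
    using pos[OF that] by (simp add: r_def log_divide log_mult)
  have "H_rv P (\<lambda>\<omega>. ((X \<omega>, Y \<omega>), Z \<omega>)) + H_rv P Y - H_rv P (\<lambda>\<omega>. (X \<omega>, Y \<omega>)) - H_rv P (\<lambda>\<omega>. (Y \<omega>, Z \<omega>))
      = (\<Sum>\<omega>\<in>set_pmf P. pmf P \<omega> * log 2 (pxy (X \<omega>, Y \<omega>)) + pmf P \<omega> * log 2 (pyz (Y \<omega>, Z \<omega>))
           - pmf P \<omega> * log 2 (pxyz ((X \<omega>, Y \<omega>), Z \<omega>)) - pmf P \<omega> * log 2 (py (Y \<omega>)))"
    unfolding H_rv_exp[OF fin] pxyz_def pxy_def pyz_def py_def
    by (simp add: sum_subtractf sum.distrib)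
  also have "\<dots> = (\<Sum>\<omega>\<in>set_pmf P. pmf P \<omega> * log 2 (r \<omega>))"
    by (intro sum.cong refl) (simp add: log_r algebra_simps)
  also have "\<dots> \<le> ((\<Sum>\<omega>\<in>set_pmf P. pmf P \<omega> * r \<omega>) - (\<Sum>\<omega>\<in>set_pmf P. pmf P \<omega>)) / ln 2"
    using fin pos by (intro sum_log2_le) (auto simp: r_def)
  also have "\<dots> \<le> 0"
    using submod_ratio_sum[OF fin, of X Y Z] sum_pmf_set[OF fin]
    unfolding r_def pxyz_def pxy_def pyz_def py_def by (simp add: divide_nonpos_pos)
  finally show ?thesis by simp
qed

lemma H_pmf_return: "H_pmf (return_pmf c) = 0"
  by (simp add: H_pmf_def)

lemma H_rv_const: "H_rv P (\<lambda>_. c) = 0"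
  by (simp add: H_rv_def map_pmf_const H_pmf_return)

text \<open>Subadditivity H(X,Z) \<le> H(X) + H(Z): submodularity with a trivial middle variable.\<close>
lemma H_rv_subadd:
  assumes fin: "finite (set_pmf P)"
  shows "H_rv P (\<lambda>\<omega>. (X \<omega>, Z \<omega>)) \<le> H_rv P X + H_rv P Z"
proof -
  have "H_rv P (\<lambda>\<omega>. ((X \<omega>, ()), Z \<omega>)) + H_rv P (\<lambda>_. ())
         \<le> H_rv P (\<lambda>\<omega>. (X \<omega>, ())) + H_rv P (\<lambda>\<omega>. ((), Z \<omega>))"
    by (rule H_rv_submod[OF fin])
  moreover have "H_rv P (\<lambda>\<omega>. ((X \<omega>, ()), Z \<omega>)) = H_rv P (\<lambda>\<omega>. (X \<omega>, Z \<omega>))"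
    by (rule H_rv_cong[OF fin]) auto
  moreover have "H_rv P (\<lambda>\<omega>. (X \<omega>, ())) = H_rv P X"
    by (rule H_rv_cong[OF fin]) auto
  moreover have "H_rv P (\<lambda>\<omega>. ((), Z \<omega>)) = H_rv P Z"
    by (rule H_rv_cong[OF fin]) auto
  ultimately show ?thesis by (simp add: H_rv_const)
qed

lemma H_rv_card:
  assumes fin: "finite (set_pmf P)" and B: "finite B" "X ` set_pmf P \<subseteq> B"
  shows "H_rv P X \<le> log 2 (card B)"
proof -
  define S where "S = set_pmf P"
  define px where "px = pmf (map_pmf X P)"
  define N where "N = real (card B)"
  have pos: "px (X \<omega>) > 0" if "\<omega> \<in> S" for \<omega>
    using pmf_map_pos[of \<omega> P X] that by (simp add: S_def px_def)
  have "X ` S \<noteq> {}" using set_pmf_not_empty by (auto simp: S_def)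
  then have Npos: "N > 0" using B unfolding N_def S_def
    by (metis card_gt_0_iff finite_subset of_nat_0_less_iff subset_empty)
  have "H_rv P X - log 2 N = (\<Sum>\<omega>\<in>S. pmf P \<omega> * (- log 2 (px (X \<omega>)) - log 2 N))"
    unfolding H_rv_exp[OF fin] S_def px_def using sum_pmf_set[OF fin]
    by (simp add: algebra_simps sum_subtractf sum_distrib_right[symmetric] sum_negf)
  also have "\<dots> = (\<Sum>\<omega>\<in>S. pmf P \<omega> * log 2 (1 / (N * px (X \<omega>))))"
  proof (intro sum.cong refl)
    fix \<omega> assume "\<omega> \<in> S"
    then show "pmf P \<omega> * (- log 2 (px (X \<omega>)) - log 2 N) = pmf P \<omega> * log 2 (1 / (N * px (X \<omega>)))"
      using pos[OF \<open>\<omega> \<in> S\<close>] Npos by (simp add: log_divide log_mult)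
  qed
  also have "\<dots> \<le> ((\<Sum>\<omega>\<in>S. pmf P \<omega> * (1 / (N * px (X \<omega>)))) - (\<Sum>\<omega>\<in>S. pmf P \<omega>)) / ln 2"
    using fin pos Npos by (intro sum_log2_le) (auto simp: S_def)
  also have "\<dots> \<le> 0"
  proof -
    have "(\<Sum>\<omega>\<in>S. pmf P \<omega> * (1 / (N * px (X \<omega>)))) = (\<Sum>x\<in>X ` S. px x * (1 / (N * px x)))"
      unfolding S_def px_def by (subst expect_map[OF fin]) (auto simp: fin)
    also have "\<dots> = (\<Sum>x\<in>X ` S. 1 / N)"
      by (intro sum.cong refl) (fastforce dest: pos)
    also have "\<dots> \<le> 1"
      using B Npos card_mono[OF B(1,2)] unfolding N_def S_def by simp
    finally show ?thesis using sum_pmf_set[OF fin] by (simp add: S_def divide_nonpos_pos)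
  qed
  finally show ?thesis by (simp add: N_def)
qed

lemma H_rv_lists_le:
  fixes X :: "'o \<Rightarrow> 'f::finite list"
  assumes fin: "finite (set_pmf P)" and len: "\<And>\<omega>. \<omega> \<in> set_pmf P \<Longrightarrow> length (X \<omega>) = n"
  shows "H_rv P X \<le> real n * log 2 CARD('f)"
proof -
  have "H_rv P X \<le> log 2 (card {xs :: 'f list. set xs \<subseteq> UNIV \<and> length xs = n})"
    using finite_lists_length_eq[of "UNIV::'f set" n] len by (intro H_rv_card[OF fin]) auto
  also have "\<dots> = real n * log 2 CARD('f)"
    using card_lists_length_eq[of "UNIV::'f set" n] by (simp add: log_nat_power)
  finally show ?thesis .
qed

lemma H_pmf_pair:
  assumes "finite (set_pmf A)" "finite (set_pmf B)"
  shows "H_pmf (pair_pmf A B) = H_pmf A + H_pmf B"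
proof -
  have "H_pmf (pair_pmf A B) = - (\<Sum>a\<in>set_pmf A. \<Sum>b\<in>set_pmf B. pmf A a * pmf B b * (log 2 (pmf A a) + log 2 (pmf B b)))"
  proof -
    have "(\<Sum>x\<in>set_pmf A \<times> set_pmf B. pmf (pair_pmf A B) x * log 2 (pmf (pair_pmf A B) x))
      = (\<Sum>(a,b)\<in>set_pmf A \<times> set_pmf B. pmf A a * pmf B b * (log 2 (pmf A a) + log 2 (pmf B b)))"
      by (intro sum.cong refl) (auto simp: pmf_pair log_mult pmf_positive)
    then show ?thesis unfolding H_pmf_def set_pair_pmf by (simp add: sum.cartesian_product)
  qed
  also have "\<dots> = - ((\<Sum>a\<in>set_pmf A. pmf A a * log 2 (pmf A a)) * (\<Sum>b\<in>set_pmf B. pmf B b)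
                 + (\<Sum>a\<in>set_pmf A. pmf A a) * (\<Sum>b\<in>set_pmf B. pmf B b * log 2 (pmf B b)))"
    by (simp add: algebra_simps sum.distrib sum_distrib_left sum_distrib_right) (rule sum.swap)
  also have "\<dots> = H_pmf A + H_pmf B"
    using sum_pmf_set[OF assms(1)] sum_pmf_set[OF assms(2)] by (simp add: H_pmf_def)
  finally show ?thesis .
qed

lemma H_pmf_inj:
  assumes "inj_on h (set_pmf D)"
  shows "H_pmf (map_pmf h D) = H_pmf D"
  unfolding H_pmf_def set_map_pmf
  using assms by (simp add: sum.reindex pmf_map_inj)

lemma finite_set_Pi_pmf:
  assumes "finite I" "\<And>i. i \<in> I \<Longrightarrow> finite (set_pmf (Q i))"
  shows "finite (set_pmf (Pi_pmf I dflt Q))"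
  using assms by (subst set_Pi_pmf) (auto intro!: finite_PiE_dflt)

lemma H_pmf_iid:
  assumes "finite I" "inj_on \<iota> {..<n}" "\<iota> ` {..<n} \<subseteq> I" "\<forall>t<n. Q (\<iota> t) = D"
    "\<forall>i\<in>I. finite (set_pmf (Q i))"
  shows "H_pmf (map_pmf (\<lambda>g. map (\<lambda>t. f (g (\<iota> t))) [0..<n]) (Pi_pmf I dflt Q)) = real n * H_pmf (map_pmf f D)"
  using assms
proof (induction n arbitrary: I)
  case 0
  then show ?case by (simp add: map_pmf_const H_pmf_return)
next
  case (Suc n)
  define x where "x = \<iota> n"
  define A where "A = I - {x}"
  have xI: "x \<in> I" using Suc.prems(3) by (auto simp: x_def)
  have IA: "I = insert x A" "x \<notin> A" "finite A" using xI Suc.prems(1) by (auto simp: A_def)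
  have ne: "\<iota> t \<noteq> x" if "t < n" for t
    using Suc.prems(2) that by (auto simp: x_def inj_on_def)
  have sub: "\<iota> ` {..<n} \<subseteq> A" using Suc.prems(3) ne by (auto simp: A_def)
  have inj: "inj_on \<iota> {..<n}" using Suc.prems(2) by (rule inj_on_subset) auto
  define L where "L = (\<lambda>g. map (\<lambda>t. f (g (\<iota> t))) [0..<n])"
  have finA: "finite (set_pmf (Pi_pmf A dflt Q))"
    using IA Suc.prems(5) by (intro finite_set_Pi_pmf) (auto simp: A_def)
  have finD: "finite (set_pmf D)" using Suc.prems(4,5) xI by (auto simp: x_def)
  txt \<open>Split off the last coordinate: the block is a product of the first n and the last one.\<close>
  have "map_pmf (\<lambda>g. map (\<lambda>t. f (g (\<iota> t))) [0..<Suc n]) (Pi_pmf I dflt Q)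
      = map_pmf (\<lambda>(y, g). L g @ [f y]) (pair_pmf (Q x) (Pi_pmf A dflt Q))"
    unfolding IA(1) Pi_pmf_insert[OF IA(3,2)] pmf.map_comp
    by (intro map_pmf_cong refl) (auto simp: L_def x_def[symmetric] ne)
  also have "\<dots> = map_pmf (\<lambda>(a, b). b @ [a]) (pair_pmf (map_pmf f (Q x)) (map_pmf L (Pi_pmf A dflt Q)))"
    by (simp add: map_pair[symmetric] pmf.map_comp o_def case_prod_unfold)
  finally have eq: "map_pmf (\<lambda>g. map (\<lambda>t. f (g (\<iota> t))) [0..<Suc n]) (Pi_pmf I dflt Q) = \<dots>" .
  have "Q x = D" using Suc.prems(4) by (simp add: x_def)
  have "H_pmf (map_pmf L (Pi_pmf A dflt Q)) = real n * H_pmf (map_pmf f D)"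
    unfolding L_def using IA(3) inj sub Suc.prems(4,5)
    by (intro Suc.IH) (auto simp: A_def)
  then show ?case unfolding eq
    using finD finA \<open>Q x = D\<close>
    by (subst H_pmf_inj) (auto simp: H_pmf_pair algebra_simps inj_on_def)
qed

lemma H_rv_fst: "H_rv (pair_pmf A B) (\<lambda>\<omega>. F (fst \<omega>)) = H_rv A F"
proof -
  have "map_pmf (\<lambda>\<omega>. F (fst \<omega>)) (pair_pmf A B) = map_pmf F (map_pmf fst (pair_pmf A B))"
    by (simp add: pmf.map_comp o_def)
  then show ?thesis unfolding H_rv_def by (simp add: map_fst_pair_pmf)
qed

lemma H_rv_snd: "H_rv (pair_pmf A B) (\<lambda>\<omega>. F (snd \<omega>)) = H_rv B F"
proof -
  have "map_pmf (\<lambda>\<omega>. F (snd \<omega>)) (pair_pmf A B) = map_pmf F (map_pmf snd (pair_pmf A B))"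
    by (simp add: pmf.map_comp o_def)
  then show ?thesis unfolding H_rv_def by (simp add: map_snd_pair_pmf)
qed

lemma H_rv_pair_indep:
  assumes "finite (set_pmf A)" "finite (set_pmf B)"
  shows "H_rv (pair_pmf A B) (\<lambda>\<omega>. (F (fst \<omega>), H (snd \<omega>))) = H_rv A F + H_rv B H"
proof -
  have "map_pmf (\<lambda>\<omega>. (F (fst \<omega>), H (snd \<omega>))) (pair_pmf A B) = pair_pmf (map_pmf F A) (map_pmf H B)"
    using map_pair[of F H A B] by (simp add: case_prod_unfold)
  then show ?thesis unfolding H_rv_def using assms by (simp add: H_pmf_pair)
qed

lemma H_rv_indep_extend:
  assumes A: "finite (set_pmf A)" and B: "finite (set_pmf B)"
    and RN: "H_rv B (\<lambda>z. (R z, N z)) = H_rv B R + H_rv B N"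
  shows "H_rv (pair_pmf A B) (\<lambda>\<omega>. ((F (fst \<omega>), R (snd \<omega>)), N (snd \<omega>)))
         = H_rv (pair_pmf A B) (\<lambda>\<omega>. (F (fst \<omega>), R (snd \<omega>))) + H_rv (pair_pmf A B) (\<lambda>\<omega>. N (snd \<omega>))"
proof -
  have fin: "finite (set_pmf (pair_pmf A B))" using A B by (simp add: set_pair_pmf)
  have "H_rv (pair_pmf A B) (\<lambda>\<omega>. ((F (fst \<omega>), R (snd \<omega>)), N (snd \<omega>)))
      = H_rv (pair_pmf A B) (\<lambda>\<omega>. (F (fst \<omega>), (R (snd \<omega>), N (snd \<omega>))))"
    by (rule H_rv_cong[OF fin]) auto
  also have "\<dots> = H_rv A F + H_rv B R + H_rv B N"
    using H_rv_pair_indep[OF A B, of F "\<lambda>z. (R z, N z)"] RN by simp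
  finally show ?thesis using H_rv_pair_indep[OF A B, of F R] H_rv_snd[of A B N] by simp
qed

subsection \<open>Fano's inequality\<close>

lemma weighted_log_bound:
  fixes w p :: "'o \<Rightarrow> real"
  assumes fin: "finite S" and w_pos: "\<And>\<omega>. \<omega> \<in> S \<Longrightarrow> w \<omega> > 0"
    and p_pos: "\<And>\<omega>. \<omega> \<in> S \<Longrightarrow> p \<omega> > 0"
    and e: "e = (\<Sum>\<omega>\<in>S. w \<omega>)" and N: "N > 0" and sumN: "(\<Sum>\<omega>\<in>S. w \<omega> / p \<omega>) \<le> N"
  shows "- (\<Sum>\<omega>\<in>S. w \<omega> * log 2 (p \<omega>)) \<le> e * log 2 N - e * log 2 e"
proof (cases "S = {}")
  case True then show ?thesis using e by simp
next
  case False
  then have epos: "e > 0" using e fin w_pos by (metis sum_pos)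
  have "- (\<Sum>\<omega>\<in>S. w \<omega> * log 2 (p \<omega>)) - e * log 2 N + e * log 2 e
       = (\<Sum>\<omega>\<in>S. w \<omega> * (log 2 e - log 2 N - log 2 (p \<omega>)))"
    unfolding e by (simp add: algebra_simps sum.distrib sum_subtractf sum_distrib_right sum_negf)
  also have "\<dots> = (\<Sum>\<omega>\<in>S. w \<omega> * log 2 (e / (N * p \<omega>)))"
  proof (intro sum.cong refl)
    fix \<omega> assume "\<omega> \<in> S"
    then show "w \<omega> * (log 2 e - log 2 N - log 2 (p \<omega>)) = w \<omega> * log 2 (e / (N * p \<omega>))"
      using p_pos[of \<omega>] N epos by (simp add: log_divide log_mult)
  qed
  also have "\<dots> \<le> ((\<Sum>\<omega>\<in>S. w \<omega> * (e / (N * p \<omega>))) - e) / ln 2"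
    unfolding e using fin w_pos p_pos N epos[unfolded e]
    by (intro sum_log2_le) (auto simp: less_imp_le intro!: divide_pos_pos mult_pos_pos)
  also have "\<dots> \<le> 0"
  proof -
    have "(\<Sum>\<omega>\<in>S. w \<omega> * (e / (N * p \<omega>))) = e / N * (\<Sum>\<omega>\<in>S. w \<omega> / p \<omega>)"
      by (simp add: sum_distrib_left field_simps)
    also have "\<dots> \<le> e / N * N"
      using sumN epos N by (intro mult_left_mono) auto
    finally show ?thesis using N by (simp add: divide_nonpos_pos)
  qed
  finally show ?thesis by simp
qed

lemma H_rv_erasure:
  assumes fin: "finite (set_pmf P)" and B: "finite B" "T ` set_pmf P \<subseteq> B"
    and e: "e = (\<Sum>\<omega>\<in>{\<omega>\<in>set_pmf P. Err \<omega>}. pmf P \<omega>)"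
  shows "H_rv P (\<lambda>\<omega>. if Err \<omega> then Some (T \<omega>) else None)
         \<le> - (1 - e) * log 2 (1 - e) - e * log 2 e + e * log 2 (card B)"
proof -
  define D where "D = (\<lambda>\<omega>. if Err \<omega> then Some (T \<omega>) else None)"
  define Sg where "Sg = {\<omega>\<in>set_pmf P. \<not> Err \<omega>}"
  define Sb where "Sb = {\<omega>\<in>set_pmf P. Err \<omega>}"
  define pD where "pD = pmf (map_pmf D P)"
  have split: "set_pmf P = Sg \<union> Sb" "Sg \<inter> Sb = {}" "finite Sg" "finite Sb"
    using fin by (auto simp: Sg_def Sb_def)
  have e_Sb: "e = (\<Sum>\<omega>\<in>Sb. pmf P \<omega>)" using e by (simp add: Sb_def)
  have e_Sg: "(\<Sum>\<omega>\<in>Sg. pmf P \<omega>) = 1 - e"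
    using sum_pmf_set[OF fin] split e_Sb by (simp add: sum.union_disjoint)
  have pD_pos: "pD (D \<omega>) > 0" if "\<omega> \<in> set_pmf P" for \<omega>
    using pmf_map_pos[of \<omega> P D] that by (simp add: pD_def)
  have pD_good: "pD (D \<omega>) = 1 - e" if "\<omega> \<in> Sg" for \<omega>
  proof -
    have "{\<omega>'\<in>set_pmf P. D \<omega>' = None} = Sg" by (auto simp: D_def Sg_def)
    then show ?thesis using that e_Sg unfolding pD_def pmf_map_sum[OF fin] by (simp add: D_def Sg_def)
  qed
  txt \<open>Each erroneous value y has probability pD y, so the reciprocal weights count the values.\<close>
  have recip_Sb: "(\<Sum>\<omega>\<in>Sb. pmf P \<omega> / pD (D \<omega>)) \<le> real (card B)"
  proof -
    have "(\<Sum>\<omega>\<in>Sb. pmf P \<omega> / pD (D \<omega>)) = (\<Sum>y\<in>D ` Sb. \<Sum>\<omega>\<in>{\<omega>\<in>Sb. D \<omega> = y}. pmf P \<omega> / pD y)"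
      using split by (subst sum.group[symmetric, of Sb "D ` Sb" D]) auto
    also have "\<dots> = (\<Sum>y\<in>D ` Sb. 1)"
    proof (intro sum.cong refl)
      fix y assume "y \<in> D ` Sb"
      then obtain \<omega> where w: "\<omega> \<in> Sb" "y = D \<omega>" by auto
      have "{\<omega>'\<in>set_pmf P. D \<omega>' = y} = {\<omega>'\<in>Sb. D \<omega>' = y}"
        using w by (auto simp: D_def Sb_def split: if_splits)
      moreover have "pD y > 0" using w pD_pos by (auto simp: Sb_def)
      ultimately show "(\<Sum>\<omega>\<in>{\<omega>\<in>Sb. D \<omega> = y}. pmf P \<omega> / pD y) = 1"
        unfolding pD_def pmf_map_sum[OF fin] by (simp add: sum_divide_distrib[symmetric])
    qed
    also have "\<dots> \<le> card (Some ` B)"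
      using B by (simp add: card_mono image_subset_iff D_def Sb_def)
    finally show ?thesis by (simp add: card_image)
  qed
  have good_part: "(\<Sum>\<omega>\<in>Sg. pmf P \<omega> * log 2 (pD (D \<omega>))) = (1 - e) * log 2 (1 - e)"
    using pD_good e_Sg by (simp add: sum_distrib_right[symmetric])
  have bad_part: "- (\<Sum>\<omega>\<in>Sb. pmf P \<omega> * log 2 (pD (D \<omega>))) \<le> e * log 2 (card B) - e * log 2 e"
  proof (cases "Sb = {}")
    case True
    then show ?thesis using e_Sb by simp
  next
    case False
    then obtain \<omega> where "\<omega> \<in> Sb" by auto
    then have "card B > 0" using B card_gt_0_iff by (auto simp: Sb_def)
    then show ?thesis
      using split pD_pos e_Sb recip_Sb
      by (intro weighted_log_bound) (auto simp: Sb_def pmf_positive)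
  qed
  have "H_rv P D = - (\<Sum>\<omega>\<in>Sg. pmf P \<omega> * log 2 (pD (D \<omega>))) - (\<Sum>\<omega>\<in>Sb. pmf P \<omega> * log 2 (pD (D \<omega>)))"
    unfolding H_rv_exp[OF fin] pD_def[symmetric] split(1) using split by (simp add: sum.union_disjoint)
  moreover have "- (1 - e) * log 2 (1 - e) = - ((1 - e) * log 2 (1 - e))" by (simp add: algebra_simps)
  ultimately show ?thesis using good_part bad_part unfolding D_def by linarith
qed

text \<open>Fano's inequality: if T is guessed from V by g with error probability e, then
  H(T | V) \<le> h(e) + e log |B|.  Given V, the pair (V, T) is encoded by the erasure variable.\<close>
lemma fano:
  assumes fin: "finite (set_pmf P)" and B: "finite B" "T ` set_pmf P \<subseteq> B"
    and e: "e = (\<Sum>\<omega>\<in>{\<omega>\<in>set_pmf P. g (V \<omega>) \<noteq> T \<omega>}. pmf P \<omega>)"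
  shows "H_rv P (\<lambda>\<omega>. (V \<omega>, T \<omega>)) - H_rv P V \<le> - (1 - e) * log 2 (1 - e) - e * log 2 e + e * log 2 (card B)"
proof -
  define D where "D = (\<lambda>\<omega>. if g (V \<omega>) \<noteq> T \<omega> then Some (T \<omega>) else None)"
  have "H_rv P (\<lambda>\<omega>. (V \<omega>, T \<omega>)) = H_rv P (\<lambda>\<omega>. (V \<omega>, D \<omega>))"
    by (rule H_rv_cong[OF fin]) (auto simp: D_def split: if_splits)
  also have "\<dots> \<le> H_rv P V + H_rv P D" by (rule H_rv_subadd[OF fin])
  also have "H_rv P D \<le> - (1 - e) * log 2 (1 - e) - e * log 2 e + e * log 2 (card B)"
    unfolding D_def by (rule H_rv_erasure[OF fin B e])
  finally show ?thesis by simp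
qed

lemma entropy_eq_H_pmf: "entropy (P :: 'x::finite pmf) = H_pmf P"
proof -
  have "(\<Sum>x\<in>UNIV. if pmf P x = 0 then 0 else pmf P x * log 2 (pmf P x))
      = (\<Sum>x\<in>UNIV. pmf P x * log 2 (pmf P x))" by (intro sum.cong) auto
  also have "\<dots> = (\<Sum>x\<in>set_pmf P. pmf P x * log 2 (pmf P x))"
    by (intro sum.mono_neutral_right) (auto simp: set_pmf_iff)
  finally show ?thesis unfolding entropy_def H_pmf_def by simp
qed

lemma cond_entropy_eq_H_rv:
  fixes P :: "'o pmf" and X :: "'o \<Rightarrow> 'x::finite" and Y :: "'o \<Rightarrow> 'y::finite"
  assumes fin: "finite (set_pmf P)"
  shows "cond_entropy P Y X = H_rv P (\<lambda>\<omega>. (X \<omega>, Y \<omega>)) - H_rv P X"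
proof -
  define pxy where "pxy = pmf (map_pmf (\<lambda>\<omega>. (X \<omega>, Y \<omega>)) P)"
  define px where "px = pmf (map_pmf X P)"
  have trm: "(if pxy (x, y) = 0 then 0 else pxy (x, y) * log 2 (pxy (x, y) / px x))
      = pxy (x, y) * log 2 (pxy (x, y)) - pxy (x, y) * log 2 (px (fst (x, y)))" for x y
  proof (cases "pxy (x, y) = 0")
    case False
    then have "(x, y) \<in> set_pmf (map_pmf (\<lambda>\<omega>. (X \<omega>, Y \<omega>)) P)" unfolding pxy_def set_pmf_iff .
    then obtain \<omega> where "\<omega> \<in> set_pmf P" "X \<omega> = x" by auto
    then have "px x > 0" using pmf_map_pos[of \<omega> P X] by (simp add: px_def)
    moreover have "pxy (x, y) > 0" using False pmf_nonneg unfolding pxy_def by (metis less_le)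
    ultimately show ?thesis using False by (simp add: log_divide right_diff_distrib)
  qed simp
  have "cond_entropy P Y X = - (\<Sum>t\<in>UNIV. pxy t * log 2 (pxy t) - pxy t * log 2 (px (fst t)))"
    unfolding cond_entropy_def Let_def pxy_def[symmetric] px_def[symmetric]
    by (simp add: case_prod_unfold trm[unfolded fst_conv])
  also have "\<dots> = - (\<Sum>t\<in>UNIV. pxy t * log 2 (pxy t)) + (\<Sum>t\<in>UNIV. pxy t * log 2 (px (fst t)))"
    by (simp add: sum_subtractf)
  also have "(\<Sum>t\<in>UNIV. pxy t * log 2 (pxy t)) = - H_rv P (\<lambda>\<omega>. (X \<omega>, Y \<omega>))"
    unfolding H_rv_exp[OF fin] pxy_def by (subst expect_map[OF fin]) auto
  also have "(\<Sum>t\<in>UNIV. pxy t * log 2 (px (fst t))) = - H_rv P X"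
    unfolding H_rv_exp[OF fin] pxy_def px_def by (subst expect_map[OF fin]) auto
  finally show ?thesis by simp
qed

subsection \<open>The cut-set inequality\<close>

lemma cond_entropy_le_coarser:
  assumes fin: "finite (set_pmf P)" and Y_of_K: "\<And>\<omega> \<omega>'. K \<omega> = K \<omega>' \<Longrightarrow> Y \<omega> = Y \<omega>'"
  shows "H_rv P (\<lambda>\<omega>. ((X \<omega>, T \<omega>), K \<omega>)) - H_rv P (\<lambda>\<omega>. (X \<omega>, K \<omega>))
         \<le> H_rv P (\<lambda>\<omega>. ((X \<omega>, Y \<omega>), T \<omega>)) - H_rv P (\<lambda>\<omega>. (X \<omega>, Y \<omega>))"
proof -
  have "H_rv P (\<lambda>\<omega>. ((T \<omega>, (X \<omega>, Y \<omega>)), K \<omega>)) + H_rv P (\<lambda>\<omega>. (X \<omega>, Y \<omega>))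
        \<le> H_rv P (\<lambda>\<omega>. (T \<omega>, (X \<omega>, Y \<omega>))) + H_rv P (\<lambda>\<omega>. ((X \<omega>, Y \<omega>), K \<omega>))"
    by (rule H_rv_submod[OF fin])
  moreover have "H_rv P (\<lambda>\<omega>. ((T \<omega>, (X \<omega>, Y \<omega>)), K \<omega>)) = H_rv P (\<lambda>\<omega>. ((X \<omega>, T \<omega>), K \<omega>))"
    by (rule H_rv_cong[OF fin]) (auto dest: Y_of_K)
  moreover have "H_rv P (\<lambda>\<omega>. ((X \<omega>, Y \<omega>), K \<omega>)) = H_rv P (\<lambda>\<omega>. (X \<omega>, K \<omega>))"
    by (rule H_rv_cong[OF fin]) (auto dest: Y_of_K)
  moreover have "H_rv P (\<lambda>\<omega>. (T \<omega>, (X \<omega>, Y \<omega>))) = H_rv P (\<lambda>\<omega>. ((X \<omega>, Y \<omega>), T \<omega>))"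
    by (rule H_rv_cong[OF fin]) auto
  ultimately show ?thesis by simp
qed

text \<open>W1 is the user's own message and
  T the messages it must decode; G is side information available at the user that is
  independent of the messages (its own downlink noise, when the cut node is the relay);
  Ys is the output at the cut node, with at most c bits of entropy; R collects all noise
  except the row N at the cut node, and N is independent of everything else.\<close>
lemma cut_set_inequality:
  assumes fin: "finite (set_pmf P)"
    and indep_W1_G: "H_rv P (\<lambda>\<omega>. (W1 \<omega>, G \<omega>)) = H_rv P W1 + H_rv P G"
    and indep_W_G: "H_rv P (\<lambda>\<omega>. ((W1 \<omega>, T \<omega>), G \<omega>)) = H_rv P (\<lambda>\<omega>. (W1 \<omega>, T \<omega>)) + H_rv P G"
    and cut_capacity: "H_rv P Ys \<le> c"
    and G_of_R: "\<And>\<omega> \<omega>'. R \<omega> = R \<omega>' \<Longrightarrow> G \<omega> = G \<omega>'"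
    and noise_recoverable: "\<And>\<omega> \<omega>'. \<omega> \<in> set_pmf P \<Longrightarrow> \<omega>' \<in> set_pmf P \<Longrightarrow> W1 \<omega> = W1 \<omega>' \<Longrightarrow> T \<omega> = T \<omega>'
              \<Longrightarrow> R \<omega> = R \<omega>' \<Longrightarrow> Ys \<omega> = Ys \<omega>' \<longleftrightarrow> N \<omega> = N \<omega>'"
    and indep_N: "H_rv P (\<lambda>\<omega>. (((W1 \<omega>, T \<omega>), R \<omega>), N \<omega>)) = H_rv P (\<lambda>\<omega>. ((W1 \<omega>, T \<omega>), R \<omega>)) + H_rv P N"
    and Yi_of_Ys_G: "\<And>\<omega> \<omega>'. Ys \<omega> = Ys \<omega>' \<Longrightarrow> G \<omega> = G \<omega>' \<Longrightarrow> Yi \<omega> = Yi \<omega>'"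
  shows "H_rv P (\<lambda>\<omega>. (W1 \<omega>, T \<omega>)) - H_rv P W1
         \<le> c - H_rv P N + (H_rv P (\<lambda>\<omega>. ((W1 \<omega>, Yi \<omega>), T \<omega>)) - H_rv P (\<lambda>\<omega>. (W1 \<omega>, Yi \<omega>)))"
proof -
  define K where "K = (\<lambda>\<omega>. (Ys \<omega>, G \<omega>))"
  define W where "W = (\<lambda>\<omega>. (W1 \<omega>, T \<omega>))"
  txt \<open>Given W1, the pair (Ys, G) carries at most c bits beyond the independent G.\<close>
  have upper: "H_rv P (\<lambda>\<omega>. (W1 \<omega>, K \<omega>)) - H_rv P W1 \<le> c + H_rv P G"
  proof -
    have "H_rv P (\<lambda>\<omega>. (W1 \<omega>, K \<omega>)) = H_rv P (\<lambda>\<omega>. ((W1 \<omega>, G \<omega>), Ys \<omega>))"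
      by (rule H_rv_cong[OF fin]) (auto simp: K_def)
    also have "\<dots> \<le> H_rv P (\<lambda>\<omega>. (W1 \<omega>, G \<omega>)) + H_rv P Ys" by (rule H_rv_subadd[OF fin])
    finally show ?thesis using indep_W1_G cut_capacity by simp
  qed
  txt \<open>Given all messages, (Ys, G) carries at least H(G) + H(N): together with R it
    reveals the noise row N, which is independent of the messages and of R.\<close>
  have lower: "H_rv P (\<lambda>\<omega>. (W \<omega>, K \<omega>)) - H_rv P W \<ge> H_rv P G + H_rv P N"
  proof -
    have submod: "H_rv P (\<lambda>\<omega>. ((Ys \<omega>, (W \<omega>, G \<omega>)), R \<omega>)) + H_rv P (\<lambda>\<omega>. (W \<omega>, G \<omega>))
        \<le> H_rv P (\<lambda>\<omega>. (Ys \<omega>, (W \<omega>, G \<omega>))) + H_rv P (\<lambda>\<omega>. ((W \<omega>, G \<omega>), R \<omega>))"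
      by (rule H_rv_submod[OF fin])
    have e1: "H_rv P (\<lambda>\<omega>. ((Ys \<omega>, (W \<omega>, G \<omega>)), R \<omega>)) = H_rv P (\<lambda>\<omega>. ((W \<omega>, R \<omega>), N \<omega>))"
    proof (rule H_rv_cong[OF fin])
      fix \<omega> \<omega>' assume w: "\<omega> \<in> set_pmf P" "\<omega>' \<in> set_pmf P"
      show "((W \<omega>, R \<omega>), N \<omega>) = ((W \<omega>', R \<omega>'), N \<omega>') \<longleftrightarrow>
            ((Ys \<omega>, W \<omega>, G \<omega>), R \<omega>) = ((Ys \<omega>', W \<omega>', G \<omega>'), R \<omega>')"
        using G_of_R[of \<omega> \<omega>'] noise_recoverable[OF w] by (auto simp: W_def)
    qed
    have e2: "H_rv P (\<lambda>\<omega>. ((W \<omega>, G \<omega>), R \<omega>)) = H_rv P (\<lambda>\<omega>. (W \<omega>, R \<omega>))"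
    proof (rule H_rv_cong[OF fin])
      fix \<omega> \<omega>' assume w: "\<omega> \<in> set_pmf P" "\<omega>' \<in> set_pmf P"
      show "(W \<omega>, R \<omega>) = (W \<omega>', R \<omega>') \<longleftrightarrow> ((W \<omega>, G \<omega>), R \<omega>) = ((W \<omega>', G \<omega>'), R \<omega>')"
        using G_of_R[of \<omega> \<omega>'] by auto
    qed
    have e3: "H_rv P (\<lambda>\<omega>. (Ys \<omega>, (W \<omega>, G \<omega>))) = H_rv P (\<lambda>\<omega>. (W \<omega>, K \<omega>))"
      by (rule H_rv_cong[OF fin]) (auto simp: K_def)
    show ?thesis using submod e1 e2 e3 indep_N indep_W_G unfolding W_def by simp
  qed
  txt \<open>Since Yi is a function of K = (Ys, G), conditioning on K instead of Yi can only
    reduce the remaining uncertainty about T.\<close>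
  have coarser: "H_rv P (\<lambda>\<omega>. (W \<omega>, K \<omega>)) - H_rv P (\<lambda>\<omega>. (W1 \<omega>, K \<omega>))
      \<le> H_rv P (\<lambda>\<omega>. ((W1 \<omega>, Yi \<omega>), T \<omega>)) - H_rv P (\<lambda>\<omega>. (W1 \<omega>, Yi \<omega>))"
    unfolding W_def by (rule cond_entropy_le_coarser[OF fin]) (auto simp: K_def intro: Yi_of_Ys_G)
  show ?thesis using upper lower coarser unfolding W_def by simp
qed

section \<open>The channel recursion\<close>

definition received :: "nat \<Rightarrow> 'f list \<times> 'f list \<times> 'f list \<times> 'f list \<Rightarrow> 'f list" where
  "received d r = (case r of (y0, y1, y2, y3) \<Rightarrow>
     if d = 0 then y0 else if d = 1 then y1 else if d = 2 then y2 else y3)"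

definition row :: "nat \<Rightarrow> nat \<Rightarrow> (nat \<times> nat \<Rightarrow> 'f) \<Rightarrow> 'f list" where
  "row n d z = map (\<lambda>t. z (d, t)) [0..<n]"

definition rest :: "nat \<Rightarrow> (nat \<times> nat \<Rightarrow> 'f) \<Rightarrow> (nat \<times> nat \<Rightarrow> 'f)" where
  "rest d z = (\<lambda>x. if fst x = d then undefined else z x)"

lemma map_upt_eq: "map f [0..<m] = map g [0..<m] \<longleftrightarrow> (\<forall>u<m. f u = g u)"
  by (auto simp: map_eq_conv)

lemma received_length: "length (received d (mwrc_run C w1 w2 w3 z t)) = t"
proof -
  have "case mwrc_run C w1 w2 w3 z t of (y0, y1, y2, y3) \<Rightarrow>
          length y0 = t \<and> length y1 = t \<and> length y2 = t \<and> length y3 = t"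
    by (induction t) (auto simp: Let_def split: prod.splits)
  then show ?thesis by (auto simp: received_def split: prod.splits)
qed

lemma received_Suc:
  "received d (mwrc_run C w1 w2 w3 z (Suc t)) = received d (mwrc_run C w1 w2 w3 z t) @
     [(case mwrc_run C w1 w2 w3 z t of (y0, y1, y2, y3) \<Rightarrow>
        if d = 0 then enc1 C t w1 y1 + enc2 C t w2 y2 + enc3 C t w3 y3 + z (0, t)
        else enc0 C t y0 + z (if d = 1 then 1 else if d = 2 then 2 else 3, t))]"
  by (auto simp: received_def Let_def split: prod.splits)

text \<open>This is the only place where the field structure is used.\<close>
lemma received_determines_noise:
  fixes z z' :: "nat \<times> nat \<Rightarrow> 'f::field"
  assumes "\<And>x. fst x \<noteq> d \<Longrightarrow> z x = z' x" "d < 4"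
    and "received d (mwrc_run C w1 w2 w3 z n) = received d (mwrc_run C w1 w2 w3 z' n)"
  shows "mwrc_run C w1 w2 w3 z n = mwrc_run C w1 w2 w3 z' n \<and> (\<forall>t<n. z (d, t) = z' (d, t))"
  using assms(3)
proof (induction n)
  case 0 then show ?case by simp
next
  case (Suc n)
  have "length (received d (mwrc_run C w1 w2 w3 z n)) = length (received d (mwrc_run C w1 w2 w3 z' n))"
    by (simp add: received_length)
  with Suc.prems[unfolded received_Suc]
  have prefix: "received d (mwrc_run C w1 w2 w3 z n) = received d (mwrc_run C w1 w2 w3 z' n)"
    and last: "(case mwrc_run C w1 w2 w3 z n of (y0, y1, y2, y3) \<Rightarrow>
        if d = 0 then enc1 C n w1 y1 + enc2 C n w2 y2 + enc3 C n w3 y3 + z (0, n)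
        else enc0 C n y0 + z (if d = 1 then 1 else if d = 2 then 2 else 3, n)) =
       (case mwrc_run C w1 w2 w3 z' n of (y0, y1, y2, y3) \<Rightarrow>
        if d = 0 then enc1 C n w1 y1 + enc2 C n w2 y2 + enc3 C n w3 y3 + z' (0, n)
        else enc0 C n y0 + z' (if d = 1 then 1 else if d = 2 then 2 else 3, n))"
    by auto
  from Suc.IH[OF prefix] have IH: "mwrc_run C w1 w2 w3 z n = mwrc_run C w1 w2 w3 z' n"
    "\<forall>t<n. z (d, t) = z' (d, t)" by auto
  obtain y0 y1 y2 y3 where r: "mwrc_run C w1 w2 w3 z n = (y0, y1, y2, y3)"
    by (cases "mwrc_run C w1 w2 w3 z n") auto
  txt \<open>Same past and same new symbol: the new noise samples at node d coincide.\<close>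
  have "d = 0 \<or> d = 1 \<or> d = 2 \<or> d = 3" using assms(2) by auto
  then have dn: "z (d, n) = z' (d, n)"
    using last unfolding IH(1)[symmetric] r by (auto split: if_splits)
  have "z (k, n) = z' (k, n)" for k
    using dn assms(1)[of "(k, n)"] by (cases "k = d") auto
  then have "mwrc_run C w1 w2 w3 z (Suc n) = mwrc_run C w1 w2 w3 z' (Suc n)"
    using IH(1) r by (simp add: Let_def)
  moreover have "\<forall>t<Suc n. z (d, t) = z' (d, t)" using IH(2) dn less_Suc_eq by auto
  ultimately show ?case by simp
qed

lemma received_user:
  assumes "i \<in> {1, 2, 3::nat}"
  shows "received i (mwrc_run C w1 w2 w3 z n) =
         map (\<lambda>t. enc0 C t (take t (received 0 (mwrc_run C w1 w2 w3 z n))) + z (i, t)) [0..<n]"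
proof (induction n)
  case 0 then show ?case by (simp add: received_def)
next
  case (Suc n)
  have prefix: "take t (received 0 (mwrc_run C w1 w2 w3 z (Suc n))) = take t (received 0 (mwrc_run C w1 w2 w3 z n))"
    if "t \<le> n" for t
    using that by (simp del: mwrc_run.simps add: received_Suc received_length)
  have "received i (mwrc_run C w1 w2 w3 z (Suc n)) = received i (mwrc_run C w1 w2 w3 z n) @
          [enc0 C n (received 0 (mwrc_run C w1 w2 w3 z n)) + z (i, n)]"
    using assms by (auto simp: received_Suc received_def Let_def split: prod.splits)
  also have "\<dots> = map (\<lambda>t. enc0 C t (take t (received 0 (mwrc_run C w1 w2 w3 z (Suc n)))) + z (i, t)) [0..<Suc n]"
    unfolding Suc.IH using prefix by (simp add: received_length)
  finally show ?case .
qed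

lemma received_user_determined:
  assumes "i \<in> {1, 2, 3::nat}"
    and "received 0 (mwrc_run C w1 w2 w3 z n) = received 0 (mwrc_run C w1' w2' w3' z' n)"
    and "row n i z = row n i z'"
  shows "received i (mwrc_run C w1 w2 w3 z n) = received i (mwrc_run C w1' w2' w3' z' n)"
  using assms(2,3) unfolding received_user[OF assms(1)] by (simp add: row_def map_upt_eq)

lemma fin_src: "finite (set_pmf (source_block (p :: ('a::finite \<times> 'b::finite \<times> 'c::finite) pmf) m))"
  unfolding source_block_def by (rule finite_set_Pi_pmf) auto

lemma fin_noise: "finite (set_pmf (noise_block (q :: nat \<Rightarrow> 'f::finite pmf) n))"
  unfolding noise_block_def by (rule finite_set_Pi_pmf) auto

lemma fin_code_space:
  "finite (set_pmf (pair_pmf (source_block (p :: ('a::finite \<times> 'b::finite \<times> 'c::finite) pmf) m)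
                             (noise_block (q :: nat \<Rightarrow> 'f::finite pmf) n)))"
  unfolding set_pair_pmf by (intro finite_cartesian_product fin_src fin_noise)

lemma noise_support:
  assumes "z \<in> set_pmf (noise_block q n)" "x \<notin> {..<4} \<times> {..<n}"
  shows "z x = undefined"
  using set_Pi_pmf_subset[of "{..<4::nat} \<times> {..<n}" undefined "\<lambda>(d, t). q d"] assms
  unfolding noise_block_def by (cases x) force

lemma noise_eq_from_row_rest:
  assumes "z \<in> set_pmf (noise_block q n)" "z' \<in> set_pmf (noise_block q n)"
    and "rest d z = rest d z'" "row n d z = row n d z'"
  shows "z = z'"
proof
  fix x :: "nat \<times> nat"
  obtain d' t where x: "x = (d', t)" by (cases x)
  show "z x = z' x"
  proof (cases "d' = d")
    case False
    then show ?thesis using fun_cong[OF assms(3), of x] x by (simp add: rest_def)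
  next
    case True
    show ?thesis
    proof (cases "t < n")
      case True
      then show ?thesis using assms(4) \<open>d' = d\<close> x by (simp add: row_def map_upt_eq)
    next
      case False
      then show ?thesis using noise_support[OF assms(1), of x] noise_support[OF assms(2), of x] x by auto
    qed
  qed
qed

lemma received_iff_row:
  assumes "d < 4" "z \<in> set_pmf (noise_block q n)" "z' \<in> set_pmf (noise_block q n)"
    and "rest d z = rest d z'"
  shows "received d (mwrc_run C w1 w2 w3 z n) = received d (mwrc_run C w1 w2 w3 z' n)
         \<longleftrightarrow> row n d z = row n d z'"
proof
  assume "received d (mwrc_run C w1 w2 w3 z n) = received d (mwrc_run C w1 w2 w3 z' n)"
  moreover have "\<And>x. fst x \<noteq> d \<Longrightarrow> z x = z' x"
    using assms(4) unfolding rest_def by (metis (mono_tags))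
  ultimately have "\<forall>t<n. z (d, t) = z' (d, t)" using received_determines_noise assms(1) by blast
  then show "row n d z = row n d z'" by (simp add: row_def map_upt_eq)
next
  assume "row n d z = row n d z'"
  then show "received d (mwrc_run C w1 w2 w3 z n) = received d (mwrc_run C w1 w2 w3 z' n)"
    using noise_eq_from_row_rest[OF assms(2-4)] by simp
qed

text \<open>The noise row at node d is independent of the remaining noise: the product pmf
  splits into the coordinates off row d and those on it.\<close>
lemma noise_indep:
  fixes q :: "nat \<Rightarrow> 'f::finite pmf"
  assumes d: "d < 4"
  shows "H_rv (noise_block q n) (\<lambda>z. (rest d z, row n d z))
         = H_rv (noise_block q n) (rest d) + H_rv (noise_block q n) (row n d)"
proof -
  define I where "I = {..<4::nat} \<times> {..<n}"
  define B where "B = {d} \<times> {..<n}"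
  define A where "A = I - B"
  define Q where "Q = (\<lambda>(d::nat, t::nat). q d)"
  define mg where "mg = (\<lambda>(f :: nat \<times> nat \<Rightarrow> 'f, g :: nat \<times> nat \<Rightarrow> 'f) x. if x \<in> A then f x else g x)"
  define PA where "PA = Pi_pmf A undefined Q"
  define PB where "PB = Pi_pmf B undefined Q"
  have IAB: "I = A \<union> B" "A \<inter> B = {}" "finite A" "finite B" using d by (auto simp: I_def A_def B_def)
  have noise: "noise_block q n = map_pmf mg (pair_pmf PA PB)"
    unfolding noise_block_def I_def[symmetric] IAB(1) mg_def PA_def PB_def Q_def
    by (rule Pi_pmf_union) (use IAB in auto)
  have suppA: "f x = undefined" if "f \<in> set_pmf PA" "x \<notin> A" for f x
    using set_Pi_pmf_subset[of A undefined Q] that IAB unfolding PA_def by (cases x) force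
  have suppB: "g x = undefined" if "g \<in> set_pmf PB" "x \<notin> B" for g x
    using set_Pi_pmf_subset[of B undefined Q] that IAB unfolding PB_def by (cases x) force
  have rest_mg: "rest d (mg (f, g)) = rest d f" if "f \<in> set_pmf PA" "g \<in> set_pmf PB" for f g
  proof
    fix x show "rest d (mg (f, g)) x = rest d f x"
      using suppA[OF that(1), of x] suppB[OF that(2), of x] by (cases x) (auto simp: rest_def mg_def B_def)
  qed
  have row_mg: "row n d (mg (f, g)) = row n d g" for f g
    by (auto simp: row_def mg_def A_def B_def)
  have finA: "finite (set_pmf PA)" "finite (set_pmf PB)"
    unfolding PA_def PB_def using IAB by (auto intro!: finite_set_Pi_pmf)
  have e1: "map_pmf (\<lambda>z. (rest d z, row n d z)) (noise_block q n)
      = map_pmf (\<lambda>\<omega>. (rest d (fst \<omega>), row n d (snd \<omega>))) (pair_pmf PA PB)"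
    unfolding noise pmf.map_comp by (intro map_pmf_cong refl) (auto simp: rest_mg row_mg)
  have e2: "map_pmf (rest d) (noise_block q n) = map_pmf (\<lambda>\<omega>. rest d (fst \<omega>)) (pair_pmf PA PB)"
    unfolding noise pmf.map_comp by (intro map_pmf_cong refl) (auto simp: rest_mg)
  have e3: "map_pmf (row n d) (noise_block q n) = map_pmf (\<lambda>\<omega>. row n d (snd \<omega>)) (pair_pmf PA PB)"
    unfolding noise pmf.map_comp by (intro map_pmf_cong refl) (auto simp: row_mg)
  show ?thesis
    unfolding H_rv_def e1 e2 e3 using H_rv_pair_indep[OF finA, of "rest d" "row n d"] H_rv_fst H_rv_snd
    unfolding H_rv_def by metis
qed

lemma row_entropy:
  fixes q :: "nat \<Rightarrow> 'f::finite pmf"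
  assumes d: "d < 4"
  shows "H_rv (noise_block q n) (row n d) = real n * entropy (q d)"
proof -
  have "H_pmf (map_pmf (\<lambda>g. map (\<lambda>t. (\<lambda>x. x) (g ((\<lambda>t. (d, t)) t))) [0..<n])
          (Pi_pmf ({..<4} \<times> {..<n}) undefined (\<lambda>(d, t). q d))) = real n * H_pmf (map_pmf (\<lambda>x. x) (q d))"
    using d by (intro H_pmf_iid) (auto simp: inj_on_def)
  then show ?thesis unfolding H_rv_def noise_block_def row_def entropy_eq_H_pmf by simp
qed

lemma src_entropy:
  fixes p :: "('a::finite \<times> 'b::finite \<times> 'c::finite) pmf"
  shows "H_rv (source_block p m) (\<lambda>s. map (\<lambda>u. h (s u)) [0..<m]) = real m * H_rv p h"
proof -
  have "H_pmf (map_pmf (\<lambda>g. map (\<lambda>t. h (g ((\<lambda>t. t) t))) [0..<m]) (Pi_pmf {..<m} undefined (\<lambda>_. p)))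
        = real m * H_pmf (map_pmf h p)"
    by (intro H_pmf_iid) auto
  then show ?thesis unfolding H_rv_def source_block_def by simp
qed

text \<open>The side information G is user i's own noise row when the cut node is the relay.\<close>
lemma code_cut_bound:
  fixes p :: "('a::finite \<times> 'b::finite \<times> 'c::finite) pmf"
    and q :: "nat \<Rightarrow> 'f::{finite,field} pmf"
    and C :: "('f, 'a, 'b, 'c) mwrc_code"
    and fi :: "'a \<times> 'b \<times> 'c \<Rightarrow> 'u" and gj :: "'a \<times> 'b \<times> 'c \<Rightarrow> 'v" and gk :: "'a \<times> 'b \<times> 'c \<Rightarrow> 'w"
    and m :: nat
  defines "Fs \<equiv> \<lambda>s :: nat \<Rightarrow> 'a \<times> 'b \<times> 'c. map (\<lambda>u. fi (s u)) [0..<m]"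
    and "Ts \<equiv> \<lambda>s :: nat \<Rightarrow> 'a \<times> 'b \<times> 'c. (map (\<lambda>u. gj (s u)) [0..<m], map (\<lambda>u. gk (s u)) [0..<m])"
  assumes inj: "\<And>x y. fi x = fi y \<Longrightarrow> gj x = gj y \<Longrightarrow> gk x = gk y \<Longrightarrow> x = y"
    and i: "i \<in> {1, 2, 3}" and d: "d = 0 \<or> d = i"
    and P0: "P0 = pair_pmf (source_block p m) (noise_block q n)"
    and run: "runw = (\<lambda>\<omega>. mwrc_run C (map (\<lambda>u. fst (fst \<omega> u)) [0..<m]) (map (\<lambda>u. fst (snd (fst \<omega> u))) [0..<m])
                       (map (\<lambda>u. snd (snd (fst \<omega> u))) [0..<m]) (snd \<omega>) n)"
  shows "H_rv P0 (\<lambda>\<omega>. (Fs (fst \<omega>), Ts (fst \<omega>))) - H_rv P0 (\<lambda>\<omega>. Fs (fst \<omega>))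
         \<le> real n * (log 2 CARD('f) - entropy (q d))
           + (H_rv P0 (\<lambda>\<omega>. ((Fs (fst \<omega>), received i (runw \<omega>)), Ts (fst \<omega>)))
              - H_rv P0 (\<lambda>\<omega>. (Fs (fst \<omega>), received i (runw \<omega>))))"
proof -
  define Gz where "Gz = (\<lambda>z :: nat \<times> nat \<Rightarrow> 'f. if d = 0 then row n i z else [])"
  have fin: "finite (set_pmf P0)" unfolding P0 by (rule fin_code_space)
  have d4: "d < 4" using d i by auto
  txt \<open>Own and wanted message lists together determine all three message lists.\<close>
  have same_run: "runw \<omega>' = mwrc_run C (map (\<lambda>u. fst (fst \<omega> u)) [0..<m])
                    (map (\<lambda>u. fst (snd (fst \<omega> u))) [0..<m]) (map (\<lambda>u. snd (snd (fst \<omega> u))) [0..<m]) (snd \<omega>') n"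
    if "Fs (fst \<omega>) = Fs (fst \<omega>')" "Ts (fst \<omega>) = Ts (fst \<omega>')" for \<omega> \<omega>'
  proof -
    have "\<forall>u<m. fst \<omega> u = fst \<omega>' u" using that inj unfolding Fs_def Ts_def map_upt_eq by auto
    then have msg: "map (\<lambda>u. h (fst \<omega>' u)) [0..<m] = map (\<lambda>u. h (fst \<omega> u)) [0..<m]"
      for h :: "'a \<times> 'b \<times> 'c \<Rightarrow> 'x"
      by (simp add: map_upt_eq)
    show ?thesis
      unfolding run by (simp only: msg[of fst] msg[of "\<lambda>w. fst (snd w)"] msg[of "\<lambda>w. snd (snd w)"])
  qed
  have indep_W_G: "H_rv P0 (\<lambda>\<omega>. (Fs (fst \<omega>), Gz (snd \<omega>))) = H_rv P0 (\<lambda>\<omega>. Fs (fst \<omega>)) + H_rv P0 (\<lambda>\<omega>. Gz (snd \<omega>))"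
    unfolding P0 H_rv_pair_indep[OF fin_src fin_noise] H_rv_fst H_rv_snd ..
  have indep_WT_G: "H_rv P0 (\<lambda>\<omega>. ((Fs (fst \<omega>), Ts (fst \<omega>)), Gz (snd \<omega>)))
      = H_rv P0 (\<lambda>\<omega>. (Fs (fst \<omega>), Ts (fst \<omega>))) + H_rv P0 (\<lambda>\<omega>. Gz (snd \<omega>))"
    using H_rv_pair_indep[where F="\<lambda>s. (Fs s, Ts s)" and H=Gz, OF fin_src fin_noise]
    unfolding P0 H_rv_fst[of _ _ "\<lambda>s. (Fs s, Ts s)"] H_rv_snd by simp
  have capacity: "H_rv P0 (\<lambda>\<omega>. received d (runw \<omega>)) \<le> real n * log 2 CARD('f)"
    using fin by (rule H_rv_lists_le) (simp add: run received_length)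
  have G_of_R: "Gz (snd \<omega>) = Gz (snd \<omega>')" if "rest d (snd \<omega>) = rest d (snd \<omega>')" for \<omega> \<omega>'
  proof (cases "d = 0")
    case True
    have "snd \<omega> (i, t) = snd \<omega>' (i, t)" for t
      using fun_cong[OF that, of "(i, t)"] True i by (auto simp: rest_def)
    then show ?thesis using True by (simp add: Gz_def row_def)
  qed (simp add: Gz_def)
  have noise_recoverable:
    "received d (runw \<omega>) = received d (runw \<omega>') \<longleftrightarrow> row n d (snd \<omega>) = row n d (snd \<omega>')"
    if "\<omega> \<in> set_pmf P0" "\<omega>' \<in> set_pmf P0" "Fs (fst \<omega>) = Fs (fst \<omega>')" "Ts (fst \<omega>) = Ts (fst \<omega>')"
      "rest d (snd \<omega>) = rest d (snd \<omega>')" for \<omega> \<omega>'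
    unfolding same_run[OF that(3,4)] using that(1,2) unfolding run P0
    by (intro received_iff_row[OF d4 _ _ that(5)]) auto
  have indep_N: "H_rv P0 (\<lambda>\<omega>. (((Fs (fst \<omega>), Ts (fst \<omega>)), rest d (snd \<omega>)), row n d (snd \<omega>)))
      = H_rv P0 (\<lambda>\<omega>. ((Fs (fst \<omega>), Ts (fst \<omega>)), rest d (snd \<omega>))) + H_rv P0 (\<lambda>\<omega>. row n d (snd \<omega>))"
    unfolding P0 by (rule H_rv_indep_extend[where F = "\<lambda>s. (Fs s, Ts s)", OF fin_src fin_noise noise_indep[OF d4]])
  have Yi_of_Ys_G: "received i (runw \<omega>) = received i (runw \<omega>')"
    if "received d (runw \<omega>) = received d (runw \<omega>')" "Gz (snd \<omega>) = Gz (snd \<omega>')" for \<omega> \<omega>'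
  proof (cases "d = 0")
    case True
    then show ?thesis using that received_user_determined[OF i] unfolding run by (simp add: Gz_def)
  next
    case False
    then show ?thesis using that d by simp
  qed
  have "H_rv P0 (\<lambda>\<omega>. (Fs (fst \<omega>), Ts (fst \<omega>))) - H_rv P0 (\<lambda>\<omega>. Fs (fst \<omega>))
        \<le> real n * log 2 CARD('f) - H_rv P0 (\<lambda>\<omega>. row n d (snd \<omega>))
          + (H_rv P0 (\<lambda>\<omega>. ((Fs (fst \<omega>), received i (runw \<omega>)), Ts (fst \<omega>)))
             - H_rv P0 (\<lambda>\<omega>. (Fs (fst \<omega>), received i (runw \<omega>))))"
    by (rule cut_set_inequality[OF fin indep_W_G indep_WT_G capacity G_of_R noise_recoverable indep_N
                                   Yi_of_Ys_G])
  moreover have "H_rv P0 (\<lambda>\<omega>. row n d (snd \<omega>)) = real n * entropy (q d)"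
    unfolding P0 H_rv_snd by (rule row_entropy[OF d4])
  moreover have "real n * (log 2 CARD('f) - entropy (q d)) = real n * log 2 CARD('f) - real n * entropy (q d)"
    by (simp add: right_diff_distrib)
  ultimately show ?thesis by linarith
qed

lemma user_bound:
  fixes p :: "('a::finite \<times> 'b::finite \<times> 'c::finite) pmf"
    and q :: "nat \<Rightarrow> 'f::{finite,field} pmf"
    and C :: "('f, 'a, 'b, 'c) mwrc_code"
    and fi :: "'a \<times> 'b \<times> 'c \<Rightarrow> 'u::finite" and gj :: "'a \<times> 'b \<times> 'c \<Rightarrow> 'v::finite"
    and gk :: "'a \<times> 'b \<times> 'c \<Rightarrow> 'w::finite"
    and dec :: "'f list \<Rightarrow> 'u list \<Rightarrow> 'v list \<times> 'w list"
  assumes inj: "\<And>x y. fi x = fi y \<Longrightarrow> gj x = gj y \<Longrightarrow> gk x = gk y \<Longrightarrow> x = y"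
    and i: "i \<in> {1, 2, 3}" and d: "d = 0 \<or> d = i"
    and P0: "P0 = pair_pmf (source_block p m) (noise_block q n)"
    and run: "runw = (\<lambda>\<omega>. mwrc_run C (map (\<lambda>u. fst (fst \<omega> u)) [0..<m]) (map (\<lambda>u. fst (snd (fst \<omega> u))) [0..<m])
                       (map (\<lambda>u. snd (snd (fst \<omega> u))) [0..<m]) (snd \<omega>) n)"
    and e: "e = (\<Sum>\<omega>\<in>{\<omega>\<in>set_pmf P0. dec (received i (runw \<omega>)) (map (\<lambda>u. fi (fst \<omega> u)) [0..<m])
                   \<noteq> (map (\<lambda>u. gj (fst \<omega> u)) [0..<m], map (\<lambda>u. gk (fst \<omega> u)) [0..<m])}. pmf P0 \<omega>)"
  shows "real m * cond_entropy p (\<lambda>w. (gj w, gk w)) fi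
         \<le> real n * (log 2 CARD('f) - entropy (q d))
           + (- (1 - e) * log 2 (1 - e) - e * log 2 e + e * log 2 (real (CARD('v) ^ m * CARD('w) ^ m)))"
proof -
  define Fs where "Fs = (\<lambda>s :: nat \<Rightarrow> 'a \<times> 'b \<times> 'c. map (\<lambda>u. fi (s u)) [0..<m])"
  define Ts where "Ts = (\<lambda>s :: nat \<Rightarrow> 'a \<times> 'b \<times> 'c. (map (\<lambda>u. gj (s u)) [0..<m], map (\<lambda>u. gk (s u)) [0..<m]))"
  define B where "B = {xs :: 'v list. set xs \<subseteq> UNIV \<and> length xs = m} \<times> {xs :: 'w list. set xs \<subseteq> UNIV \<and> length xs = m}"
  have fin: "finite (set_pmf P0)" unfolding P0 by (rule fin_code_space)
  have block_entropy: "real m * cond_entropy p (\<lambda>w. (gj w, gk w)) fi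
      = H_rv P0 (\<lambda>\<omega>. (Fs (fst \<omega>), Ts (fst \<omega>))) - H_rv P0 (\<lambda>\<omega>. Fs (fst \<omega>))"
  proof -
    have "H_rv P0 (\<lambda>\<omega>. (Fs (fst \<omega>), Ts (fst \<omega>)))
        = H_rv (source_block p m) (\<lambda>s. map (\<lambda>u. (fi (s u), gj (s u), gk (s u))) [0..<m])"
      unfolding P0 H_rv_fst[of _ _ "\<lambda>s. (Fs s, Ts s)"]
      by (rule H_rv_cong[OF fin_src]) (auto simp: Fs_def Ts_def map_upt_eq)
    moreover have "H_rv P0 (\<lambda>\<omega>. Fs (fst \<omega>)) = real m * H_rv p fi"
      unfolding P0 H_rv_fst unfolding Fs_def by (rule src_entropy)
    ultimately show ?thesis
      using cond_entropy_eq_H_rv[of p "\<lambda>w. (gj w, gk w)" fi] src_entropy[of p m "\<lambda>w. (fi w, gj w, gk w)"]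
      by (simp add: right_diff_distrib)
  qed
  have cardB: "card B = CARD('v) ^ m * CARD('w) ^ m"
    using card_lists_length_eq[of "UNIV::'v set" m] card_lists_length_eq[of "UNIV::'w set" m]
    unfolding B_def by (simp add: card_cartesian_product)
  have fano_i: "H_rv P0 (\<lambda>\<omega>. ((Fs (fst \<omega>), received i (runw \<omega>)), Ts (fst \<omega>)))
                - H_rv P0 (\<lambda>\<omega>. (Fs (fst \<omega>), received i (runw \<omega>)))
      \<le> - (1 - e) * log 2 (1 - e) - e * log 2 e + e * log 2 (card B)"
  proof (rule fano[OF fin, where g = "\<lambda>(w, y). dec y w"])
    show "finite B" unfolding B_def
      using finite_lists_length_eq[of "UNIV::'v set" m] finite_lists_length_eq[of "UNIV::'w set" m] by simp
    show "(\<lambda>\<omega>. Ts (fst \<omega>)) ` set_pmf P0 \<subseteq> B" by (auto simp: B_def Ts_def)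
    show "e = (\<Sum>\<omega>\<in>{\<omega> \<in> set_pmf P0. (case (Fs (fst \<omega>), received i (runw \<omega>)) of (w, y) \<Rightarrow> dec y w)
                \<noteq> Ts (fst \<omega>)}. pmf P0 \<omega>)"
      unfolding e by (simp add: Fs_def Ts_def)
  qed
  show ?thesis
    using code_cut_bound[where fi = fi and gj = gj and gk = gk, OF inj i d P0 run] fano_i[unfolded cardB] block_entropy
    unfolding Fs_def Ts_def by linarith
qed

lemma binary_entropy_le:
  fixes e :: real
  assumes "0 \<le> e" "e \<le> 1"
  shows "- (1 - e) * log 2 (1 - e) - e * log 2 e \<le> (2 * sqrt e + e) / ln 2"
proof -
  have small: "- e * ln e \<le> 2 * sqrt e"
  proof (cases "e = 0")
    case False
    then have ep: "e > 0" using assms by simp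
    have "- ln e = 2 * ln (1 / sqrt e)" using ep by (simp add: ln_div ln_sqrt)
    also have "\<dots> \<le> 2 * (1 / sqrt e - 1)" using ep by (intro mult_left_mono ln_le_minus_one) simp_all
    finally have "- ln e \<le> 2 / sqrt e" by (simp add: field_simps)
    then have "e * (- ln e) \<le> e * (2 / sqrt e)" using ep by (intro mult_left_mono) auto
    also have "e * (2 / sqrt e) = 2 * sqrt e" using ep
      by (metis real_div_sqrt times_divide_eq_right less_eq_real_def mult.commute)
    finally show ?thesis by simp
  qed simp
  have large: "- (1 - e) * ln (1 - e) \<le> e"
  proof (cases "e = 1")
    case False
    then have ep: "1 - e > 0" using assms by simp
    have "ln (1 / (1 - e)) \<le> 1 / (1 - e) - 1" using ep by (intro ln_le_minus_one) simp
    then have "- ln (1 - e) \<le> e / (1 - e)" using ep by (simp add: ln_div field_simps)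
    then have "(1 - e) * (- ln (1 - e)) \<le> (1 - e) * (e / (1 - e))" using ep by (intro mult_left_mono) auto
    also have "(1 - e) * (e / (1 - e)) = e" using ep by simp
    finally show ?thesis by (simp add: algebra_simps)
  qed simp
  have "- (1 - e) * log 2 (1 - e) - e * log 2 e = (- (1 - e) * ln (1 - e) + (- e * ln e)) / ln 2"
    by (simp add: log_def field_simps)
  also have "\<dots> \<le> (e + 2 * sqrt e) / ln 2"
    using small large by (intro divide_right_mono) auto
  finally show ?thesis by (simp add: add.commute)
qed

lemma le_of_vanishing_slack:
  fixes h b L :: real
  assumes "\<And>\<zeta>. \<zeta> > 0 \<Longrightarrow> h \<le> b + ((2 * sqrt \<zeta> + \<zeta>) / ln 2 + \<zeta> * L)"
  shows "h \<le> b"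
proof (rule ccontr)
  assume "\<not> h \<le> b"
  then have gap: "h - b > 0" by simp
  have "((\<lambda>\<zeta>. (2 * sqrt \<zeta> + \<zeta>) / ln 2 + \<zeta> * L) \<longlongrightarrow> (2 * sqrt 0 + 0) / ln 2 + 0 * L) (at_right (0::real))"
    by (intro tendsto_intros) auto
  then have "((\<lambda>\<zeta>. (2 * sqrt \<zeta> + \<zeta>) / ln 2 + \<zeta> * L) \<longlongrightarrow> 0) (at_right (0::real))" by simp
  from order_tendstoD(2)[OF this gap]
  have "eventually (\<lambda>\<zeta>. (2 * sqrt \<zeta> + \<zeta>) / ln 2 + \<zeta> * L < h - b) (at_right (0::real))" .
  moreover have "eventually (\<lambda>\<zeta>. \<zeta> > (0::real)) (at_right 0)" by (simp add: eventually_at_right_less)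
  ultimately have "eventually (\<lambda>\<zeta>. \<zeta> > 0 \<and> (2 * sqrt \<zeta> + \<zeta>) / ln 2 + \<zeta> * L < h - b) (at_right (0::real))"
    by (rule eventually_conj[OF _ _, rotated])
  then obtain \<zeta> where "\<zeta> > 0" "(2 * sqrt \<zeta> + \<zeta>) / ln 2 + \<zeta> * L < h - b"
    using eventually_happens[of _ "at_right (0::real)"] trivial_limit_at_right_real by blast
  then show False using assms[of \<zeta>] by simp
qed

lemma sum_pmf_le_measure:
  assumes "finite (set_pmf M)" "\<And>\<omega>. \<omega> \<in> set_pmf M \<Longrightarrow> Q \<omega> \<Longrightarrow> \<omega> \<in> E"
  shows "(\<Sum>\<omega>\<in>{\<omega>\<in>set_pmf M. Q \<omega>}. pmf M \<omega>) \<le> measure M E"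
proof -
  have "(\<Sum>\<omega>\<in>{\<omega>\<in>set_pmf M. Q \<omega>}. pmf M \<omega>) \<le> sum (pmf M) (E \<inter> set_pmf M)"
    using assms by (intro sum_mono2) auto
  also have "\<dots> = measure M (E \<inter> set_pmf M)"
    using assms(1) by (intro measure_measure_pmf_finite[symmetric]) auto
  also have "\<dots> = measure M E" by (simp add: measure_Int_set_pmf)
  finally show ?thesis .
qed

lemma rate_bound_slack:
  fixes p :: "('a::finite \<times> 'b::finite \<times> 'c::finite) pmf"
    and q :: "nat \<Rightarrow> 'f::{finite,field} pmf"
    and C :: "('f, 'a, 'b, 'c) mwrc_code"
    and fi :: "'a \<times> 'b \<times> 'c \<Rightarrow> 'u::finite" and gj :: "'a \<times> 'b \<times> 'c \<Rightarrow> 'v::finite"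
    and gk :: "'a \<times> 'b \<times> 'c \<Rightarrow> 'w::finite"
    and dec :: "'f list \<Rightarrow> 'u list \<Rightarrow> 'v list \<times> 'w list"
  assumes inj: "\<And>x y. fi x = fi y \<Longrightarrow> gj x = gj y \<Longrightarrow> gk x = gk y \<Longrightarrow> x = y"
    and i: "i \<in> {1, 2, 3}" and d: "d = 0 \<or> d = i"
    and code: "m > 0" "real n / real m = \<kappa>"
    and P0: "P0 = pair_pmf (source_block p m) (noise_block q n)"
    and run: "runw = (\<lambda>\<omega>. mwrc_run C (map (\<lambda>u. fst (fst \<omega> u)) [0..<m]) (map (\<lambda>u. fst (snd (fst \<omega> u))) [0..<m])
                       (map (\<lambda>u. snd (snd (fst \<omega> u))) [0..<m]) (snd \<omega>) n)"
    and e: "e = (\<Sum>\<omega>\<in>{\<omega>\<in>set_pmf P0. dec (received i (runw \<omega>)) (map (\<lambda>u. fi (fst \<omega> u)) [0..<m])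
                   \<noteq> (map (\<lambda>u. gj (fst \<omega> u)) [0..<m], map (\<lambda>u. gk (fst \<omega> u)) [0..<m])}. pmf P0 \<omega>)"
    and e_lt: "e < \<zeta>"
  shows "cond_entropy p (\<lambda>w. (gj w, gk w)) fi
         \<le> \<kappa> * (log 2 CARD('f) - entropy (q d)) + ((2 * sqrt \<zeta> + \<zeta>) / ln 2 + \<zeta> * (log 2 CARD('v) + log 2 CARD('w)))"
proof -
  define L where "L = log 2 CARD('v) + log 2 CARD('w)"
  define A where "A = log 2 CARD('f) - entropy (q d)"
  define slack where "slack = (2 * sqrt \<zeta> + \<zeta>) / ln 2"
  have fin: "finite (set_pmf P0)" unfolding P0 by (rule fin_code_space)
  have e_nonneg: "e \<ge> 0" unfolding e by (intro sum_nonneg) auto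
  then have "\<zeta> > 0" using e_lt by simp
  have e_le_1: "e \<le> 1"
  proof -
    have "e \<le> (\<Sum>\<omega>\<in>set_pmf P0. pmf P0 \<omega>)" unfolding e using fin by (intro sum_mono2) auto
    then show ?thesis using sum_pmf_set[OF fin] by simp
  qed
  have fano_term: "- (1 - e) * log 2 (1 - e) - e * log 2 e \<le> slack"
  proof -
    have "- (1 - e) * log 2 (1 - e) - e * log 2 e \<le> (2 * sqrt e + e) / ln 2"
      by (rule binary_entropy_le[OF e_nonneg e_le_1])
    also have "\<dots> \<le> slack" unfolding slack_def
      using e_lt e_nonneg by (intro divide_right_mono add_mono mult_left_mono real_sqrt_le_mono) auto
    finally show ?thesis .
  qed
  have list_term: "e * log 2 (real (CARD('v) ^ m * CARD('w) ^ m)) \<le> \<zeta> * (real m * L)"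
  proof -
    have "log 2 (real (CARD('v) ^ m * CARD('w) ^ m)) = real m * L"
      by (simp add: L_def log_mult log_nat_power algebra_simps)
    moreover have "L \<ge> 0" unfolding L_def by simp
    ultimately show ?thesis using e_lt by (simp add: mult_right_mono)
  qed
  have "real m * cond_entropy p (\<lambda>w. (gj w, gk w)) fi \<le> real n * A + slack + \<zeta> * (real m * L)"
    using user_bound[OF inj i d P0 run e] fano_term list_term unfolding A_def by linarith
  also have "\<dots> \<le> real m * (\<kappa> * A + (slack + \<zeta> * L))"
  proof -
    have "real n = real m * \<kappa>" using code by (auto simp: field_simps)
    moreover have "slack \<le> real m * slack"
    proof -
      have "slack \<ge> 0" using \<open>\<zeta> > 0\<close> by (simp add: slack_def)
      moreover have "real m \<ge> 1" using code(1) by simp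
      ultimately show ?thesis using mult_right_mono[of 1 "real m" slack] by simp
    qed
    ultimately show ?thesis by (simp add: algebra_simps)
  qed
  finally show ?thesis
    using code(1) unfolding A_def slack_def L_def by (simp add: mult_le_cancel_left_pos)
qed

lemma rate_bound:
  fixes p :: "('a::finite \<times> 'b::finite \<times> 'c::finite) pmf"
    and q :: "nat \<Rightarrow> 'f::{finite,field} pmf"
    and fi :: "'a \<times> 'b \<times> 'c \<Rightarrow> 'u::finite" and gj :: "'a \<times> 'b \<times> 'c \<Rightarrow> 'v::finite"
    and gk :: "'a \<times> 'b \<times> 'c \<Rightarrow> 'w::finite"
    and dec :: "('f, 'a, 'b, 'c) mwrc_code \<Rightarrow> 'f list \<Rightarrow> 'u list \<Rightarrow> 'v list \<times> 'w list"
  assumes ach: "achievable p q \<kappa>"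
    and inj: "\<And>x y. fi x = fi y \<Longrightarrow> gj x = gj y \<Longrightarrow> gk x = gk y \<Longrightarrow> x = y"
    and i: "i \<in> {1, 2, 3}" and d: "d = 0 \<or> d = i"
    and err: "\<And>C m n. (\<Sum>\<omega>\<in>{\<omega>\<in>set_pmf (pair_pmf (source_block p m) (noise_block q n)).
                 dec C (received i (mwrc_run C (map (\<lambda>u. fst (fst \<omega> u)) [0..<m]) (map (\<lambda>u. fst (snd (fst \<omega> u))) [0..<m])
                       (map (\<lambda>u. snd (snd (fst \<omega> u))) [0..<m]) (snd \<omega>) n)) (map (\<lambda>u. fi (fst \<omega> u)) [0..<m])
                   \<noteq> (map (\<lambda>u. gj (fst \<omega> u)) [0..<m], map (\<lambda>u. gk (fst \<omega> u)) [0..<m])}.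
                 pmf (pair_pmf (source_block p m) (noise_block q n)) \<omega>) \<le> err_prob p q C m n"
  shows "cond_entropy p (\<lambda>w. (gj w, gk w)) fi \<le> \<kappa> * (log 2 CARD('f) - entropy (q d))"
proof (rule le_of_vanishing_slack[where L = "log 2 CARD('v) + log 2 CARD('w)"])
  fix \<zeta> :: real assume "\<zeta> > 0"
  then obtain m n and C :: "('f, 'a, 'b, 'c) mwrc_code"
    where code: "m > 0" "real n / real m = \<kappa>" "err_prob p q C m n < \<zeta>"
    using ach unfolding achievable_def by blast
  show "cond_entropy p (\<lambda>w. (gj w, gk w)) fi \<le> \<kappa> * (log 2 CARD('f) - entropy (q d))
          + ((2 * sqrt \<zeta> + \<zeta>) / ln 2 + \<zeta> * (log 2 CARD('v) + log 2 CARD('w)))"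
    using rate_bound_slack[OF inj i d code(1,2) refl refl refl
                           order.strict_trans1[OF err[where C = C and m = m and n = n] code(3)]] .
qed

lemma user_ratio_bound:
  fixes p :: "('a::finite \<times> 'b::finite \<times> 'c::finite) pmf"
    and q :: "nat \<Rightarrow> 'f::{finite,field} pmf"
    and fi :: "'a \<times> 'b \<times> 'c \<Rightarrow> 'u::finite" and gj :: "'a \<times> 'b \<times> 'c \<Rightarrow> 'v::finite"
    and gk :: "'a \<times> 'b \<times> 'c \<Rightarrow> 'w::finite"
    and dec :: "('f, 'a, 'b, 'c) mwrc_code \<Rightarrow> 'f list \<Rightarrow> 'u list \<Rightarrow> 'v list \<times> 'w list"
  assumes ent: "\<forall>d<4. entropy (q d) < log 2 (real CARD('f))"
    and ach: "achievable p q \<kappa>"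
    and inj: "\<And>x y. fi x = fi y \<Longrightarrow> gj x = gj y \<Longrightarrow> gk x = gk y \<Longrightarrow> x = y"
    and i: "i \<in> {1, 2, 3}"
    and err: "\<And>C m n. (\<Sum>\<omega>\<in>{\<omega>\<in>set_pmf (pair_pmf (source_block p m) (noise_block q n)).
                 dec C (received i (mwrc_run C (map (\<lambda>u. fst (fst \<omega> u)) [0..<m]) (map (\<lambda>u. fst (snd (fst \<omega> u))) [0..<m])
                       (map (\<lambda>u. snd (snd (fst \<omega> u))) [0..<m]) (snd \<omega>) n)) (map (\<lambda>u. fi (fst \<omega> u)) [0..<m])
                   \<noteq> (map (\<lambda>u. gj (fst \<omega> u)) [0..<m], map (\<lambda>u. gk (fst \<omega> u)) [0..<m])}.
                 pmf (pair_pmf (source_block p m) (noise_block q n)) \<omega>) \<le> err_prob p q C m n"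
  shows "cond_entropy p (\<lambda>w. (gj w, gk w)) fi
           / (log 2 (real CARD('f)) - max (entropy (q 0)) (entropy (q i))) \<le> \<kappa>"
proof -
  have cut: "cond_entropy p (\<lambda>w. (gj w, gk w)) fi \<le> \<kappa> * (log 2 CARD('f) - entropy (q d))"
    if "d = 0 \<or> d = i" for d
    by (rule rate_bound[OF ach inj i that err])
  have "cond_entropy p (\<lambda>w. (gj w, gk w)) fi
        \<le> \<kappa> * (log 2 (real CARD('f)) - max (entropy (q 0)) (entropy (q i)))"
    using cut[of 0] cut[of i] by (simp add: max_def)
  moreover have "log 2 (real CARD('f)) - max (entropy (q 0)) (entropy (q i)) > 0"
    using ent i by auto
  ultimately show ?thesis by (simp add: pos_divide_le_eq mult.commute)
qed

lemma cut_set_bound: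
  fixes p :: "('a::finite \<times> 'b::finite \<times> 'c::finite) pmf"
    and q :: "nat \<Rightarrow> 'f::{finite,field} pmf"
  assumes ent: "\<forall>d<4. entropy (q d) < log 2 (real CARD('f))" and ach: "achievable p q \<kappa>"
  shows "Max { cond_entropy p (\<lambda>(w1, w2, w3). (w2, w3)) (\<lambda>(w1, w2, w3). w1)
               / (log 2 (real CARD('f)) - max (entropy (q 0)) (entropy (q 1))),
             cond_entropy p (\<lambda>(w1, w2, w3). (w1, w3)) (\<lambda>(w1, w2, w3). w2)
               / (log 2 (real CARD('f)) - max (entropy (q 0)) (entropy (q 2))),
             cond_entropy p (\<lambda>(w1, w2, w3). (w1, w2)) (\<lambda>(w1, w2, w3). w3)
               / (log 2 (real CARD('f)) - max (entropy (q 0)) (entropy (q 3))) } \<le> \<kappa>"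
proof -
  have proj: "(\<lambda>(w1 :: 'a, w2 :: 'b, w3 :: 'c). (w2, w3)) = (\<lambda>w. (fst (snd w), snd (snd w)))"
    "(\<lambda>(w1 :: 'a, w2 :: 'b, w3 :: 'c). (w1, w3)) = (\<lambda>w. (fst w, snd (snd w)))"
    "(\<lambda>(w1 :: 'a, w2 :: 'b, w3 :: 'c). (w1, w2)) = (\<lambda>w. (fst w, fst (snd w)))"
    "(\<lambda>(w1 :: 'a, w2 :: 'b, w3 :: 'c). w1) = fst"
    "(\<lambda>(w1 :: 'a, w2 :: 'b, w3 :: 'c). w2) = (\<lambda>w. fst (snd w))"
    "(\<lambda>(w1 :: 'a, w2 :: 'b, w3 :: 'c). w3) = (\<lambda>w. snd (snd w))"
    by auto
  txt \<open>Each decoding error of user i is an error of the code.\<close>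
  have user1: "cond_entropy p (\<lambda>w. (fst (snd w), snd (snd w))) fst
      / (log 2 (real CARD('f)) - max (entropy (q 0)) (entropy (q 1))) \<le> \<kappa>"
    by (rule user_ratio_bound[where dec = dec1, OF ent ach])
       ((auto simp: prod_eq_iff)[2], unfold err_prob_def, rule sum_pmf_le_measure[OF fin_code_space],
        auto simp: Let_def received_def split: prod.splits)
  have user2: "cond_entropy p (\<lambda>w. (fst w, snd (snd w))) (\<lambda>w. fst (snd w))
      / (log 2 (real CARD('f)) - max (entropy (q 0)) (entropy (q 2))) \<le> \<kappa>"
    by (rule user_ratio_bound[where dec = dec2, OF ent ach])
       ((auto simp: prod_eq_iff)[2], unfold err_prob_def, rule sum_pmf_le_measure[OF fin_code_space],
        auto simp: Let_def received_def split: prod.splits)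
  have user3: "cond_entropy p (\<lambda>w. (fst w, fst (snd w))) (\<lambda>w. snd (snd w))
      / (log 2 (real CARD('f)) - max (entropy (q 0)) (entropy (q 3))) \<le> \<kappa>"
    by (rule user_ratio_bound[where dec = dec3, OF ent ach])
       ((auto simp: prod_eq_iff)[2], unfold err_prob_def, rule sum_pmf_le_measure[OF fin_code_space],
        auto simp: Let_def received_def split: prod.splits)
  show ?thesis unfolding proj using user1 user2 user3 by simp
qed

theorem lemma1:
  fixes p :: "('a::finite \<times> 'b::finite \<times> 'c::finite) pmf"
    and q :: "nat \<Rightarrow> ('f::{finite, field}) pmf"
  assumes "\<forall>d<4. entropy (q d) < log 2 (real CARD('f))"
  shows "ereal (Max
           { cond_entropy p (\<lambda>(w1, w2, w3). (w2, w3)) (\<lambda>(w1, w2, w3). w1)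
               / (log 2 (real CARD('f)) - max (entropy (q 0)) (entropy (q 1))),
             cond_entropy p (\<lambda>(w1, w2, w3). (w1, w3)) (\<lambda>(w1, w2, w3). w2)
               / (log 2 (real CARD('f)) - max (entropy (q 0)) (entropy (q 2))),
             cond_entropy p (\<lambda>(w1, w2, w3). (w1, w2)) (\<lambda>(w1, w2, w3). w3)
               / (log 2 (real CARD('f)) - max (entropy (q 0)) (entropy (q 3))) })
         \<le> kappa_star p q"
  unfolding kappa_star_def
  by (rule Inf_greatest, elim imageE, simp only: ereal_less_eq(3) mem_Collect_eq)
     (erule cut_set_bound[OF assms])

end
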